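(* Let $\mathcal{P}=[0,1]^n\cap K$ be a polytope, where $K$ is an affine subspace of $\mathbb{R}^n$. Then there exists a combinatorial Bernoulli factory for $\mathcal{P}$ which terminates almost surely everywhere on $\mathcal{P}$, including on the boundary of $[0,1]^n$.
   Context: A (multiparameter) Bernoulli factory with input $(p_1,\dots,p_n)$ is a (possibly infinite) rooted binary tree in which every node has either $2$ children or $0$ children (leaf). Each internal node is labelled either by an index $i\in[n]$ or by a constant $c\in(0,1)$; each leaf is labelled $0$ or $1$. To execute it with coins $p\in[0,1]^n$, start at the root; at a node labelled $i$ draw a fresh independent Bernoulli($p_i$) sample, at a node labelled $c$ a fresh independent Bernoulli($c$) sample; move to the child corresponding to the outcome; upon reaching a leaf output its label. It implements $f:\mathcal{P}\to[0,1]$ if for every $p\in\mathcal{P}$ it reaches a leaf almost surely and outputs $1$ with probability exactly $f(p)$. A combinatorial Bernoulli factory for $\mathcal{P}$, with vertex set $V(\mathcal{P})$, is a collection of $|V(\mathcal{P})|$ multiparameter Bernoulli factories implementing functions $f_v:\mathcal{P}\to[0,1]$, $v\in V(\mathcal{P})$, such that for all $p\in\mathcal{P}$: $\sum_{v\in V(\mathcal{P})}f_v(p)=1$ and $\sum_{v\in V(\mathcal{P})}v\,f_v(p)=p$ (so that it can be used to sample a random vertex $v$ with $\mathbb{E}_p[v]=p$). *)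

theory Defs
  imports "HOL-Analysis.Analysis"
begin

datatype 'i bf_node = Coin 'i | Const real | Leaf bool

text \<open>A (possibly infinite) rooted binary tree is given by the labels of all
  finite addresses (root = [], child for outcome b of node w = w @ [b]).
  The actual nodes of the tree are the addresses all of whose proper prefixes
  are internal; so every node has 2 children (internal) or 0 children (leaf).\<close>
type_synonym 'i bf_tree = "bool list \<Rightarrow> 'i bf_node"

definition is_internal :: "'i bf_node \<Rightarrow> bool" where
  "is_internal x \<longleftrightarrow> (\<forall>b. x \<noteq> Leaf b)"

definition reached :: "'i bf_tree \<Rightarrow> bool list \<Rightarrow> bool" where
  "reached t w \<longleftrightarrow> (\<forall>j<length w. is_internal (t (take j w)))"

definition leaf_paths :: "'i bf_tree \<Rightarrow> bool \<Rightarrow> bool list set" where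
  "leaf_paths t b = {w. reached t w \<and> t w = Leaf b}"

fun coin_prob :: "real ^ 'n \<Rightarrow> 'n bf_node \<Rightarrow> real" where
  "coin_prob p (Coin i) = p $ i"
| "coin_prob p (Const c) = c"
| "coin_prob p (Leaf b) = 0"

definition path_prob :: "'n bf_tree \<Rightarrow> real ^ 'n \<Rightarrow> bool list \<Rightarrow> real" where
  "path_prob t p w =
     (\<Prod>j<length w. (let q = coin_prob p (t (take j w)) in if w ! j then q else 1 - q))"

definition wf_factory :: "'n bf_tree \<Rightarrow> bool" where
  "wf_factory t \<longleftrightarrow> (\<forall>w c. reached t w \<and> t w = Const c \<longrightarrow> 0 < c \<and> c < 1)"

text \<open>t implements f on P: for every p in P it reaches a leaf almost surely
  and outputs 1 with probability exactly f p.\<close>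
definition implements :: "'n bf_tree \<Rightarrow> (real ^ 'n \<Rightarrow> real) \<Rightarrow> (real ^ 'n) set \<Rightarrow> bool" where
  "implements t f P \<longleftrightarrow>
     (\<forall>p\<in>P. (path_prob t p has_sum 1) (leaf_paths t True \<union> leaf_paths t False)
          \<and> (path_prob t p has_sum f p) (leaf_paths t True))"

definition vertices :: "(real ^ 'n) set \<Rightarrow> (real ^ 'n) set" where
  "vertices P = {v. v extreme_point_of P}"

definition comb_factory :: "(real ^ 'n) set \<Rightarrow> (real ^ 'n \<Rightarrow> 'n bf_tree) \<Rightarrow> bool" where
  "comb_factory P T \<longleftrightarrow>
     (\<exists>f :: real ^ 'n \<Rightarrow> real ^ 'n \<Rightarrow> real.
        (\<forall>v\<in>vertices P. wf_factory (T v) \<and> implements (T v) (f v) P)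
      \<and> (\<forall>p\<in>P. (\<Sum>v\<in>vertices P. f v p) = 1 \<and> (\<Sum>v\<in>vertices P. f v p *\<^sub>R v) = p))"

end

theory Submission
  imports Defs
begin

text \<open>Flipping each of the n coins once outputs a vertex of the unit cube with mean p. The
  affine space K is an intersection of hyperplanes a \<bullet> x = \<beta>, which are cut out one at a
  time: given a sampler of points of P with mean p, keep a sample that lies on the hyperplane;
  otherwise draw two independent samples u1, u2 and, with probability proportional to
  a \<bullet> u1 - a \<bullet> u2 if a \<bullet> u1 > \<beta> > a \<bullet> u2, output the point of the segment [u1, u2] on
  the hyperplane, else retry. As a \<bullet> p = \<beta>, the positive and negative excesses balance,
  so the accepted points have the mean of the samples off the hyperplane; and a retry has
  probability below 1 as soon as such samples occur, so the sampler halts almost surely at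
  every p, on the boundary of the cube too. Finally the factory of a vertex v samples such a
  point y of the polytope and outputs 1 with probability the barycentric coordinate of y at v.\<close>

text \<open>Factories whose leaves carry labels of an arbitrary type, so that they compose
  monadically; the factories of the statement are the case of Boolean labels.\<close>

datatype ('n,'a) gnode = GCoin 'n | GConst real | GLeaf 'a

type_synonym ('n,'a) gtree = "bool list \<Rightarrow> ('n,'a) gnode"

definition ginternal :: "('n,'a) gnode \<Rightarrow> bool" where
  "ginternal x \<longleftrightarrow> (\<forall>a. x \<noteq> GLeaf a)"

lemma ginternal_simps[simp]: "ginternal (GCoin i)" "ginternal (GConst c)" "\<not> ginternal (GLeaf a)"
  by (auto simp: ginternal_def)

definition greached :: "('n,'a) gtree \<Rightarrow> bool list \<Rightarrow> bool" where
  "greached t w \<longleftrightarrow> (\<forall>j<length w. ginternal (t (take j w)))"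

definition gleaves :: "('n,'a) gtree \<Rightarrow> bool list set" where
  "gleaves t = {w. greached t w \<and> \<not> ginternal (t w)}"

definition gleaf_paths :: "('n,'a) gtree \<Rightarrow> 'a \<Rightarrow> bool list set" where
  "gleaf_paths t a = {w. greached t w \<and> t w = GLeaf a}"

definition leaf_label :: "('n,'a) gtree \<Rightarrow> bool list \<Rightarrow> 'a" where
  "leaf_label t w = (case t w of GLeaf a \<Rightarrow> a | _ \<Rightarrow> undefined)"

fun gcoin_prob :: "real ^ 'n \<Rightarrow> ('n,'a) gnode \<Rightarrow> real" where
  "gcoin_prob p (GCoin i) = p $ i" | "gcoin_prob p (GConst c) = c" | "gcoin_prob p (GLeaf a) = 0"

definition gpath_prob :: "('n,'a) gtree \<Rightarrow> real ^ 'n \<Rightarrow> bool list \<Rightarrow> real" where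
  "gpath_prob t p w =
     (\<Prod>j<length w. (let q = gcoin_prob p (t (take j w)) in if w ! j then q else 1 - q))"

definition wf_gtree :: "('n,'a) gtree \<Rightarrow> bool" where
  "wf_gtree t \<longleftrightarrow> (\<forall>w c. greached t w \<and> t w = GConst c \<longrightarrow> 0 < c \<and> c < 1)"

definition unit_cube :: "(real ^ 'n) set" where
  "unit_cube = {p. \<forall>i. 0 \<le> p $ i \<and> p $ i \<le> 1}"

text \<open>Under coins p, t outputs a with probability D a; mass 1 on the leaves means that t
  halts almost surely.\<close>

definition output_dist :: "('n,'a) gtree \<Rightarrow> real ^ 'n \<Rightarrow> 'a set \<Rightarrow> ('a \<Rightarrow> real) \<Rightarrow> bool" where
  "output_dist t p S D \<longleftrightarrow> finite S \<and> (\<forall>a. a \<notin> S \<longrightarrow> D a = 0)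
      \<and> (gpath_prob t p has_sum 1) (gleaves t) \<and> (\<forall>a. (gpath_prob t p has_sum D a) (gleaf_paths t a))"

lemma greached_take: "greached t w \<Longrightarrow> greached t (take j w)"
  unfolding greached_def by (auto simp: min_def)

lemma gleaf_paths_subset: "gleaf_paths t a \<subseteq> gleaves t"
  unfolding gleaf_paths_def gleaves_def by auto

lemma gleaf_pathsD: "w \<in> gleaf_paths t a \<Longrightarrow> w \<in> gleaves t"
  unfolding gleaf_paths_def gleaves_def by auto

lemma gleaf_paths_leaf_label: "w \<in> gleaves t \<Longrightarrow> w \<in> gleaf_paths t (leaf_label t w)"
  unfolding gleaf_paths_def gleaves_def leaf_label_def ginternal_def by auto

lemma leaf_label_gleaf_paths: "w \<in> gleaf_paths t a \<Longrightarrow> leaf_label t w = a"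
  unfolding gleaf_paths_def leaf_label_def by auto

lemma gleaves_prefix_eq:
  assumes "w \<in> gleaves t" "w' \<in> gleaves t" "take (length w) w' = w"
  shows "w' = w"
proof (cases "length w < length w'")
  case True
  then have "ginternal (t (take (length w) w'))" using assms(2) unfolding gleaves_def greached_def by auto
  then show ?thesis using assms(1,3) unfolding gleaves_def by auto
next
  case False
  then show ?thesis using assms(3) by simp
qed

lemma gleaves_append_eq:
  assumes "w0 \<in> gleaves t" "w0' \<in> gleaves t" "w0 @ w1 = w0' @ w1'"
  shows "w0 = w0' \<and> w1 = w1'"
proof -
  have "w0 = w0'"
  proof (cases "length w0 \<le> length w0'")
    case True
    have "take (length w0) w0' = w0" using assms(3) True
      by (metis append_eq_append_conv_if take_all_iff)
    then show ?thesis using gleaves_prefix_eq[OF assms(1,2)] by simp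
  next
    case False
    have "take (length w0') w0 = w0'" using assms(3) False
      by (metis append_eq_append_conv_if nat_le_linear take_all_iff)
    then show ?thesis using gleaves_prefix_eq[OF assms(2,1)] by simp
  qed
  then show ?thesis using assms(3) by simp
qed

lemma gpath_prob_nonneg:
  assumes "p \<in> unit_cube" "wf_gtree t" "greached t w"
  shows "0 \<le> gpath_prob t p w"
  unfolding gpath_prob_def
proof (rule prod_nonneg, clarify)
  fix j assume j: "j < length w"
  define x where "x = t (take j w)"
  have rx: "greached t (take j w)" using greached_take[OF assms(3)] .
  have "0 \<le> gcoin_prob p x \<and> gcoin_prob p x \<le> 1"
  proof (cases x)
    case (GCoin i) then show ?thesis using assms(1) by (auto simp: unit_cube_def)
  next
    case (GConst c)
    then have "t (take j w) = GConst c" using x_def by simp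
    moreover have "0 < c \<and> c < 1" using assms(2) rx \<open>t (take j w) = GConst c\<close> unfolding wf_gtree_def by blast
    ultimately show ?thesis using GConst by simp
  next
    case (GLeaf a) then show ?thesis by simp
  qed
  then show "0 \<le> (let q = gcoin_prob p (t (take j w)) in if w ! j then q else 1 - q)"
    by (auto simp: x_def Let_def)
qed

lemma prod_lessThan_add:
  "(\<Prod>j<m+n. f j) = (\<Prod>j<m. f j) * (\<Prod>k<n. f (m+k))" for f :: "nat \<Rightarrow> real"
  by (induction n) (auto simp: mult.assoc)

lemma gpath_prob_append:
  "gpath_prob t p (w0 @ w1) = gpath_prob t p w0 *
     (\<Prod>k<length w1. (let q = gcoin_prob p (t (w0 @ take k w1)) in if w1 ! k then q else 1 - q))"
proof -
  have "gpath_prob t p (w0 @ w1) = (\<Prod>j<length w0 + length w1.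
         (let q = gcoin_prob p (t (take j (w0 @ w1))) in if (w0 @ w1) ! j then q else 1 - q))"
    by (simp add: gpath_prob_def)
  also have "\<dots> = gpath_prob t p w0 *
     (\<Prod>k<length w1. (let q = gcoin_prob p (t (w0 @ take k w1)) in if w1 ! k then q else 1 - q))"
    unfolding prod_lessThan_add gpath_prob_def
    by (intro arg_cong2[where f="(*)"] prod.cong) (auto simp: nth_append)
  finally show ?thesis .
qed

definition leaf_tree :: "'a \<Rightarrow> ('n,'a) gtree" where "leaf_tree a = (\<lambda>w. GLeaf a)"

lemma gleaves_leaf_tree[simp]: "gleaves (leaf_tree a) = {[]}"
  unfolding gleaves_def leaf_tree_def greached_def
  by (auto simp: ginternal_def)

lemma gleaf_paths_leaf_tree: "gleaf_paths (leaf_tree a) b = (if a = b then {[]} else {})"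
  unfolding gleaf_paths_def leaf_tree_def greached_def
  by (auto simp: ginternal_def)

lemma wf_gtree_leaf_tree[simp]: "wf_gtree (leaf_tree a)" by (simp add: wf_gtree_def leaf_tree_def)

lemma output_dist_leaf_tree: "output_dist (leaf_tree a) p {a} (\<lambda>b. if b = a then 1 else 0)"
  unfolding output_dist_def gleaf_paths_leaf_tree
  by (auto simp: has_sum_finite_iff gpath_prob_def)

definition branch :: "('n,'a) gnode \<Rightarrow> ('n,'a) gtree \<Rightarrow> ('n,'a) gtree \<Rightarrow> ('n,'a) gtree" where
  "branch x t0 t1 = (\<lambda>w. case w of [] \<Rightarrow> x | b # w' \<Rightarrow> (if b then t1 w' else t0 w'))"

lemma branch_Nil[simp]: "branch x t0 t1 [] = x" and
  branch_Cons[simp]: "branch x t0 t1 (b # w) = (if b then t1 w else t0 w)"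
  by (simp_all add: branch_def)

lemma greached_branch_Cons:
  "greached (branch x t0 t1) (b # w) \<longleftrightarrow> ginternal x \<and> greached (if b then t1 else t0) w"
  unfolding greached_def
  by (auto simp: less_Suc_eq_0_disj)


lemma gpath_prob_Nil[simp]: "gpath_prob t p [] = 1" by (simp add: gpath_prob_def)

lemma gpath_prob_branch_Cons:
  "gpath_prob (branch x t0 t1) p (b # w) = (if b then gcoin_prob p x else 1 - gcoin_prob p x) * gpath_prob (if b then t1 else t0) p w"
  unfolding gpath_prob_def length_Cons prod.lessThan_Suc_shift by (cases b) (simp_all add: Let_def)

lemma gleaves_branch:
  assumes "ginternal x"
  shows "gleaves (branch x t0 t1) = Cons False ` gleaves t0 \<union> Cons True ` gleaves t1"
proof -
  have "w \<in> gleaves (branch x t0 t1) \<longleftrightarrow> w \<in> Cons False ` gleaves t0 \<union> Cons True ` gleaves t1" for w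
    using assms by (cases w) (auto simp: gleaves_def greached_branch_Cons)
  then show ?thesis by blast
qed

lemma gleaf_paths_branch:
  assumes "ginternal x"
  shows "gleaf_paths (branch x t0 t1) a = Cons False ` gleaf_paths t0 a \<union> Cons True ` gleaf_paths t1 a"
proof -
  have "w \<in> gleaf_paths (branch x t0 t1) a \<longleftrightarrow> w \<in> Cons False ` gleaf_paths t0 a \<union> Cons True ` gleaf_paths t1 a" for w
    using assms by (cases w) (auto simp: gleaf_paths_def greached_branch_Cons)
  then show ?thesis by blast
qed

lemma wf_gtree_branch:
  assumes "\<And>c. x = GConst c \<Longrightarrow> 0 < c \<and> c < 1" "wf_gtree t0" "wf_gtree t1"
  shows "wf_gtree (branch x t0 t1)"
  unfolding wf_gtree_def
proof (intro allI impI)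
  fix w c assume h: "greached (branch x t0 t1) w \<and> branch x t0 t1 w = GConst c"
  show "0 < c \<and> c < 1"
  proof (cases w)
    case Nil then show ?thesis using h assms(1) by simp
  next
    case (Cons b w')
    then show ?thesis using h assms(2,3) by (auto simp: greached_branch_Cons wf_gtree_def split: if_splits)
  qed
qed

lemma has_sum_Cons_image:
  "(f has_sum s) (Cons b ` A) \<longleftrightarrow> ((\<lambda>w. f (b # w)) has_sum s) A"
  by (subst has_sum_reindex) (auto simp: o_def)

lemma has_sum_branch:
  assumes "ginternal x" "(gpath_prob t0 p has_sum s0) A0" "(gpath_prob t1 p has_sum s1) A1"
  shows "(gpath_prob (branch x t0 t1) p has_sum ((1 - gcoin_prob p x) * s0 + gcoin_prob p x * s1)) (Cons False ` A0 \<union> Cons True ` A1)"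
proof (rule has_sum_Un_disjoint)
  show "(gpath_prob (branch x t0 t1) p has_sum (1 - gcoin_prob p x) * s0) (Cons False ` A0)"
    unfolding has_sum_Cons_image gpath_prob_branch_Cons using has_sum_cmult_right[OF assms(2)] by simp
  show "(gpath_prob (branch x t0 t1) p has_sum gcoin_prob p x * s1) (Cons True ` A1)"
    unfolding has_sum_Cons_image gpath_prob_branch_Cons using has_sum_cmult_right[OF assms(3)] by simp
qed auto

lemma output_dist_branch:
  assumes "ginternal x" "output_dist t0 p S0 D0" "output_dist t1 p S1 D1"
  shows "output_dist (branch x t0 t1) p (S0 \<union> S1) (\<lambda>a. (1 - gcoin_prob p x) * D0 a + gcoin_prob p x * D1 a)"
proof -
  have "(gpath_prob (branch x t0 t1) p has_sum (1 - gcoin_prob p x) * 1 + gcoin_prob p x * 1) (gleaves (branch x t0 t1))"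
    unfolding gleaves_branch[OF assms(1)]
    by (rule has_sum_branch[OF assms(1)]) (use assms(2,3) in \<open>auto simp: output_dist_def\<close>)
  moreover have "(gpath_prob (branch x t0 t1) p has_sum (1 - gcoin_prob p x) * D0 a + gcoin_prob p x * D1 a) (gleaf_paths (branch x t0 t1) a)" for a
    unfolding gleaf_paths_branch[OF assms(1)]
    by (rule has_sum_branch[OF assms(1)]) (use assms(2,3) in \<open>auto simp: output_dist_def\<close>)
  ultimately show ?thesis using assms(2,3) by (auto simp: output_dist_def)
qed

text \<open>Only applied to internal nodes, so the junk label is never observed.\<close>

fun forget_label :: "('n,'a) gnode \<Rightarrow> ('n,'b) gnode" where
  "forget_label (GCoin i) = GCoin i"
| "forget_label (GConst c) = GConst c"
| "forget_label (GLeaf a) = GLeaf undefined"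

lemma ginternal_forget_label[simp]: "ginternal (forget_label x) = ginternal x" by (cases x) auto
lemma gcoin_prob_forget_label[simp]: "gcoin_prob p (forget_label x) = gcoin_prob p x" by (cases x) auto
lemma forget_label_eq_GConst[simp]: "forget_label x = GConst c \<longleftrightarrow> x = GConst c" by (cases x) auto

text \<open>Monadic bind: once t reaches a leaf labelled a, continue with s a.\<close>

definition gbind :: "('n,'a) gtree \<Rightarrow> ('a \<Rightarrow> ('n,'b) gtree) \<Rightarrow> ('n,'b) gtree" where
  "gbind t s = (\<lambda>w. if \<exists>j\<le>length w. take j w \<in> gleaves t
      then (let j = (LEAST j. take j w \<in> gleaves t) in s (leaf_label t (take j w)) (drop j w))
      else forget_label (t w))"

lemma take_gleaves_unique:
  assumes "take j w \<in> gleaves t" "take k w \<in> gleaves t" "j \<le> length w" "k \<le> length w"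
  shows "j = k"
proof -
  have *: "j = k" if "take j w \<in> gleaves t" "take k w \<in> gleaves t" "j \<le> length w" "k \<le> length w" "j \<le> k" for j k
  proof -
    have "take (length (take j w)) (take k w) = take j w" using that by (simp add: min_def)
    then have "take k w = take j w" using gleaves_prefix_eq[OF that(1,2)] by simp
    then show ?thesis using that by (metis length_take min.absorb2)
  qed
  show ?thesis using *[OF assms] *[OF assms(2,1,4,3)] by linarith
qed

lemma gbind_append_leaf:
  assumes "w0 \<in> gleaves t"
  shows "gbind t s (w0 @ w1) = s (leaf_label t w0) w1"
proof -
  have ex: "\<exists>j\<le>length (w0 @ w1). take j (w0 @ w1) \<in> gleaves t"
    using assms by (intro exI[of _ "length w0"]) auto
  have "(LEAST j. take j (w0 @ w1) \<in> gleaves t) = length w0"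
  proof (rule Least_equality)
    show "take (length w0) (w0 @ w1) \<in> gleaves t" using assms by simp
    fix y assume y: "take y (w0 @ w1) \<in> gleaves t"
    show "length w0 \<le> y"
    proof (rule ccontr)
      assume "\<not> length w0 \<le> y"
      then have "y = length w0" using take_gleaves_unique[OF y, of "length w0"] assms by simp
      then show False using \<open>\<not> length w0 \<le> y\<close> by simp
    qed
  qed
  then show ?thesis using ex by (simp add: gbind_def Let_def)
qed

lemma gbind_before_leaf:
  assumes "\<forall>j\<le>length w. take j w \<notin> gleaves t"
  shows "gbind t s w = forget_label (t w)"
  using assms by (auto simp: gbind_def)

lemma proper_prefix_notin_gleaves:
  assumes "w0 \<in> gleaves t" "j < length w0"
  shows "\<forall>i\<le>length (take j w0). take i (take j w0) \<notin> gleaves t"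
proof (intro allI impI)
  fix i assume "i \<le> length (take j w0)"
  then have i: "i < length w0" using assms(2) by simp
  have "ginternal (t (take i w0))" using assms(1) i unfolding gleaves_def greached_def by auto
  moreover have "take i (take j w0) = take i w0" using \<open>i \<le> length (take j w0)\<close>
    by (auto simp: take_take min_def split: if_splits)
  ultimately show "take i (take j w0) \<notin> gleaves t" by (simp add: gleaves_def)
qed

lemma all_less_add_iff: "(\<forall>j<m+n. P j) \<longleftrightarrow> (\<forall>j<m. P j) \<and> (\<forall>k<n. P (m+k))" for m n :: nat
  by (auto, metis add_diff_inverse_nat nat_add_left_cancel_less)

lemma greached_gbind_append:
  assumes "w0 \<in> gleaves t"
  shows "greached (gbind t s) (w0 @ w1) \<longleftrightarrow> greached (s (leaf_label t w0)) w1"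
proof -
  have A: "ginternal (gbind t s (take j (w0 @ w1)))" if "j < length w0" for j
  proof -
    have "gbind t s (take j (w0 @ w1)) = forget_label (t (take j w0))"
      using that gbind_before_leaf[OF proper_prefix_notin_gleaves[OF assms that]] by simp
    moreover have "ginternal (t (take j w0))" using assms that unfolding gleaves_def greached_def by auto
    ultimately show ?thesis by simp
  qed
  have B: "gbind t s (take (length w0 + k) (w0 @ w1)) = s (leaf_label t w0) (take k w1)" for k
    using gbind_append_leaf[OF assms] by simp
  show ?thesis unfolding greached_def length_append all_less_add_iff using A B by simp
qed

lemma greached_gbind_cases:
  assumes "greached (gbind t s) w"
  shows "(\<exists>w0 w1. w0 \<in> gleaves t \<and> w = w0 @ w1) \<or> (greached t w \<and> (\<forall>j\<le>length w. take j w \<notin> gleaves t))"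
proof (cases "\<exists>j\<le>length w. take j w \<in> gleaves t")
  case True
  then obtain j where "take j w \<in> gleaves t" by blast
  then show ?thesis by (metis append_take_drop_id)
next
  case False
  have "ginternal (t (take j w))" if j: "j < length w" for j
  proof -
    have "\<forall>i\<le>length (take j w). take i (take j w) \<notin> gleaves t"
      using False j by (auto simp: min_def)
    then have "gbind t s (take j w) = forget_label (t (take j w))" by (rule gbind_before_leaf)
    moreover have "ginternal (gbind t s (take j w))" using assms j by (simp add: greached_def)
    ultimately show ?thesis by (metis ginternal_forget_label)
  qed
  then show ?thesis using False by (simp add: greached_def)
qed

lemma gleaves_gbind:
  "gleaves (gbind t s) = {w. \<exists>w0 w1. w = w0 @ w1 \<and> w0 \<in> gleaves t \<and> w1 \<in> gleaves (s (leaf_label t w0))}"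
proof (intro set_eqI iffI)
  fix w assume w: "w \<in> gleaves (gbind t s)"
  then have r: "greached (gbind t s) w" and ni: "\<not> ginternal (gbind t s w)" by (auto simp: gleaves_def)
  from greached_gbind_cases[OF r] show "w \<in> {w. \<exists>w0 w1. w = w0 @ w1 \<and> w0 \<in> gleaves t \<and> w1 \<in> gleaves (s (leaf_label t w0))}"
  proof
    assume "\<exists>w0 w1. w0 \<in> gleaves t \<and> w = w0 @ w1"
    then obtain w0 w1 where h: "w0 \<in> gleaves t" "w = w0 @ w1" by blast
    then have "w1 \<in> gleaves (s (leaf_label t w0))"
      using r ni greached_gbind_append[OF h(1), where s=s] gbind_append_leaf[OF h(1), where s=s] by (auto simp: gleaves_def)
    then show ?thesis using h by blast
  next
    assume h: "greached t w \<and> (\<forall>j\<le>length w. take j w \<notin> gleaves t)"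
    then have "gbind t s w = forget_label (t w)" using gbind_before_leaf by blast
    then have "w \<in> gleaves t" using h ni by (simp add: gleaves_def)
    then show ?thesis using h by (metis order_refl take_all)
  qed
next
  fix w assume "w \<in> {w. \<exists>w0 w1. w = w0 @ w1 \<and> w0 \<in> gleaves t \<and> w1 \<in> gleaves (s (leaf_label t w0))}"
  then obtain w0 w1 where h: "w = w0 @ w1" "w0 \<in> gleaves t" "w1 \<in> gleaves (s (leaf_label t w0))" by blast
  then show "w \<in> gleaves (gbind t s)"
    using greached_gbind_append[OF h(2), where s=s] gbind_append_leaf[OF h(2), where s=s] by (auto simp: gleaves_def)
qed

lemma gleaf_paths_eq: "gleaf_paths t a = {w \<in> gleaves t. t w = GLeaf a}"
  unfolding gleaf_paths_def gleaves_def by auto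

lemma gleaf_paths_gbind:
  "gleaf_paths (gbind t s) c = {w. \<exists>w0 w1. w = w0 @ w1 \<and> w0 \<in> gleaves t \<and> w1 \<in> gleaf_paths (s (leaf_label t w0)) c}"
proof (intro set_eqI iffI)
  fix w assume "w \<in> gleaf_paths (gbind t s) c"
  then have w: "w \<in> gleaves (gbind t s)" "gbind t s w = GLeaf c" by (auto simp: gleaf_paths_eq)
  then obtain w0 w1 where h: "w = w0 @ w1" "w0 \<in> gleaves t" "w1 \<in> gleaves (s (leaf_label t w0))"
    unfolding gleaves_gbind by blast
  have "s (leaf_label t w0) w1 = GLeaf c" using w(2) h(1) gbind_append_leaf[OF h(2), where s=s] by simp
  then have "w1 \<in> gleaf_paths (s (leaf_label t w0)) c" using h(3) by (simp add: gleaf_paths_eq)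
  then show "w \<in> {w. \<exists>w0 w1. w = w0 @ w1 \<and> w0 \<in> gleaves t \<and> w1 \<in> gleaf_paths (s (leaf_label t w0)) c}"
    using h by blast
next
  fix w assume "w \<in> {w. \<exists>w0 w1. w = w0 @ w1 \<and> w0 \<in> gleaves t \<and> w1 \<in> gleaf_paths (s (leaf_label t w0)) c}"
  then obtain w0 w1 where h: "w = w0 @ w1" "w0 \<in> gleaves t" "w1 \<in> gleaf_paths (s (leaf_label t w0)) c" by blast
  have "w \<in> gleaves (gbind t s)" unfolding gleaves_gbind using h(1,2) gleaf_pathsD[OF h(3)] by blast
  moreover have "gbind t s w = GLeaf c" using h gbind_append_leaf[OF h(2), where s=s] by (simp add: gleaf_paths_def)
  ultimately show "w \<in> gleaf_paths (gbind t s) c" by (simp add: gleaf_paths_eq)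
qed



lemma gpath_prob_gbind:
  assumes "w0 \<in> gleaves t"
  shows "gpath_prob (gbind t s) p (w0 @ w1) = gpath_prob t p w0 * gpath_prob (s (leaf_label t w0)) p w1"
proof -
  have "gpath_prob (gbind t s) p w0 = gpath_prob t p w0"
    unfolding gpath_prob_def
  proof (rule prod.cong[OF refl])
    fix j assume "j \<in> {..<length w0}"
    then have "gbind t s (take j w0) = forget_label (t (take j w0))"
      using gbind_before_leaf[OF proper_prefix_notin_gleaves[OF assms]] by simp
    then show "(let q = gcoin_prob p (gbind t s (take j w0)) in if w0 ! j then q else 1 - q) =
               (let q = gcoin_prob p (t (take j w0)) in if w0 ! j then q else 1 - q)" by simp
  qed
  moreover have "gbind t s (w0 @ take k w1) = s (leaf_label t w0) (take k w1)" for k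
    using gbind_append_leaf[OF assms, where s=s] by simp
  ultimately show ?thesis unfolding gpath_prob_append by (simp add: gpath_prob_def)
qed

lemma wf_gtree_gbind:
  assumes "wf_gtree t" "\<And>a. wf_gtree (s a)"
  shows "wf_gtree (gbind t s)"
  unfolding wf_gtree_def
proof (intro allI impI)
  fix w c assume h: "greached (gbind t s) w \<and> gbind t s w = GConst c"
  have hr: "greached (gbind t s) w" using h by simp
  from greached_gbind_cases[OF hr] show "0 < c \<and> c < 1"
  proof (elim disjE exE conjE)
    fix w0 w1 assume a: "w0 \<in> gleaves t" "w = w0 @ w1"
    then have "greached (s (leaf_label t w0)) w1" "s (leaf_label t w0) w1 = GConst c"
      using h greached_gbind_append[OF a(1), where s=s] gbind_append_leaf[OF a(1), where s=s] by auto
    then show ?thesis using assms(2) by (auto simp: wf_gtree_def)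
  next
    assume "greached t w" "\<forall>j\<le>length w. take j w \<notin> gleaves t"
    then show ?thesis using h gbind_before_leaf[of w t s] assms(1) by (auto simp: wf_gtree_def)
  qed
qed

lemma has_sum_by_label_UN:
  assumes "finite S'" "\<And>a. (gpath_prob t p has_sum D a) (gleaf_paths t a)"
  shows "((\<lambda>w. gpath_prob t p w * \<phi> (leaf_label t w)) has_sum (\<Sum>a\<in>S'. D a * \<phi> a)) (\<Union>a\<in>S'. gleaf_paths t a)"
  using assms(1)
proof (induction S' rule: finite_induct)
  case empty then show ?case by simp
next
  case (insert a S')
  have "((\<lambda>w. gpath_prob t p w * \<phi> (leaf_label t w)) has_sum D a * \<phi> a) (gleaf_paths t a)"
  proof -
    have "((\<lambda>w. gpath_prob t p w * \<phi> a) has_sum D a * \<phi> a) (gleaf_paths t a)"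
      using has_sum_cmult_left[OF assms(2)[of a]] by simp
    then show ?thesis by (subst has_sum_cong[where g="\<lambda>w. gpath_prob t p w * \<phi> a"]) (auto simp: leaf_label_gleaf_paths)
  qed
  moreover have "gleaf_paths t a \<inter> (\<Union>b\<in>S'. gleaf_paths t b) = {}"
    using insert(2) by (auto simp: gleaf_paths_def)
  ultimately show ?case using insert by (simp add: has_sum_Un_disjoint)
qed

lemma output_dist_zero_imp_path_prob_zero:
  assumes "output_dist t p S D" "p \<in> unit_cube" "wf_gtree t" "w \<in> gleaf_paths t a" "D a = 0"
  shows "gpath_prob t p w = 0"
proof (rule nonneg_has_sum_le_0D[where f="gpath_prob t p" and a="D a" and A="gleaf_paths t a"])
  show "(gpath_prob t p has_sum D a) (gleaf_paths t a)" using assms(1) by (simp add: output_dist_def)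
qed (use assms gpath_prob_nonneg in \<open>auto simp: gleaf_paths_def\<close>)

lemma has_sum_by_label:
  assumes "output_dist t p S D" "p \<in> unit_cube" "wf_gtree t"
  shows "((\<lambda>w. gpath_prob t p w * \<phi> (leaf_label t w)) has_sum (\<Sum>a\<in>S. D a * \<phi> a)) (gleaves t)"
proof -
  have fin: "finite S" and z: "\<And>a. a \<notin> S \<Longrightarrow> D a = 0" and hs: "\<And>a. (gpath_prob t p has_sum D a) (gleaf_paths t a)"
    using assms(1) by (auto simp: output_dist_def)
  have U: "((\<lambda>w. gpath_prob t p w * \<phi> (leaf_label t w)) has_sum (\<Sum>a\<in>S. D a * \<phi> a)) (\<Union>a\<in>S. gleaf_paths t a)"
    by (rule has_sum_by_label_UN[OF fin hs])
  show ?thesis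
  proof (subst has_sum_cong_neutral[where T="\<Union>a\<in>S. gleaf_paths t a" and g="\<lambda>w. gpath_prob t p w * \<phi> (leaf_label t w)"])
    fix w assume w: "w \<in> gleaves t - (\<Union>a\<in>S. gleaf_paths t a)"
    then have "w \<in> gleaf_paths t (leaf_label t w)" "leaf_label t w \<notin> S" using gleaf_paths_leaf_label by fastforce+
    then have "gpath_prob t p w = 0" using output_dist_zero_imp_path_prob_zero[OF assms(1,2,3)] z by blast
    then show "gpath_prob t p w * \<phi> (leaf_label t w) = 0" by simp
  next
    fix w assume "w \<in> (\<Union>a\<in>S. gleaf_paths t a) - gleaves t"
    then obtain a where "w \<in> gleaf_paths t a" "w \<notin> gleaves t" by blast
    then show "gpath_prob t p w * \<phi> (leaf_label t w) = 0" using gleaf_pathsD[of w t a] by simp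
  next
    show "((\<lambda>w. gpath_prob t p w * \<phi> (leaf_label t w)) has_sum (\<Sum>a\<in>S. D a * \<phi> a)) (\<Union>a\<in>S. gleaf_paths t a)"
      by (rule U)
  qed auto
qed

lemma output_dist_sum_eq_1:
  assumes "output_dist t p S D" "p \<in> unit_cube" "wf_gtree t"
  shows "(\<Sum>a\<in>S. D a) = 1"
proof -
  have "(gpath_prob t p has_sum (\<Sum>a\<in>S. D a * 1)) (gleaves t)"
    using has_sum_by_label[OF assms, of "\<lambda>_. 1"] by simp
  moreover have "(gpath_prob t p has_sum 1) (gleaves t)" using assms(1) by (simp add: output_dist_def)
  ultimately show ?thesis using has_sum_unique by fastforce
qed

lemma output_dist_nonneg:
  assumes "output_dist t p S D" "p \<in> unit_cube" "wf_gtree t"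
  shows "0 \<le> D a"
proof -
  have "(gpath_prob t p has_sum D a) (gleaf_paths t a)" using assms(1) by (simp add: output_dist_def)
  then show ?thesis by (rule has_sum_nonneg) (use assms gpath_prob_nonneg in \<open>auto simp: gleaf_paths_def\<close>)
qed

lemma has_sum_gbind:
  assumes p: "p \<in> unit_cube" and wt: "wf_gtree t" and ws: "\<And>a. wf_gtree (s a)" and r: "output_dist t p S D"
    and B: "\<And>a. B a \<subseteq> gleaves (s a)"
    and G: "\<And>a. a \<in> S \<Longrightarrow> D a \<noteq> 0 \<Longrightarrow> (gpath_prob (s a) p has_sum G a) (B a)"
  shows "(gpath_prob (gbind t s) p has_sum (\<Sum>a\<in>S. D a * G a))
           {w. \<exists>w0 w1. w = w0 @ w1 \<and> w0 \<in> gleaves t \<and> w1 \<in> B (leaf_label t w0)}"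
proof -
  define G' where "G' a = (if a \<in> S \<and> D a \<noteq> 0 then G a else 0)" for a
  have zS: "\<And>a. a \<notin> S \<Longrightarrow> D a = 0" using r by (simp add: output_dist_def)
  have eqset: "{w. \<exists>w0 w1. w = w0 @ w1 \<and> w0 \<in> gleaves t \<and> w1 \<in> B (leaf_label t w0)}
      = (\<lambda>(x,y). x @ y) ` Sigma (gleaves t) (\<lambda>w0. B (leaf_label t w0))" by auto
  have inj: "inj_on (\<lambda>(x,y). x @ y) (Sigma (gleaves t) (\<lambda>w0. B (leaf_label t w0)))"
    by (auto simp: inj_on_def dest: gleaves_append_eq)
  define f where "f = (\<lambda>(w0,w1). gpath_prob t p w0 * gpath_prob (s (leaf_label t w0)) p w1)"
  have inner: "((\<lambda>w1. f (w0, w1)) has_sum gpath_prob t p w0 * G' (leaf_label t w0)) (B (leaf_label t w0))"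
    if w0: "w0 \<in> gleaves t" for w0
  proof (cases "leaf_label t w0 \<in> S \<and> D (leaf_label t w0) \<noteq> 0")
    case True
    then show ?thesis unfolding f_def G'_def using has_sum_cmult_right[OF G[of "leaf_label t w0"]] by simp
  next
    case False
    then have "D (leaf_label t w0) = 0" using zS by blast
    then have "gpath_prob t p w0 = 0" using output_dist_zero_imp_path_prob_zero[OF r p wt gleaf_paths_leaf_label[OF w0]] by simp
    then show ?thesis by (simp add: f_def)
  qed
  have outer: "((\<lambda>w0. gpath_prob t p w0 * G' (leaf_label t w0)) has_sum (\<Sum>a\<in>S. D a * G a)) (gleaves t)"
  proof -
    have "((\<lambda>w0. gpath_prob t p w0 * G' (leaf_label t w0)) has_sum (\<Sum>a\<in>S. D a * G' a)) (gleaves t)"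
      by (rule has_sum_by_label[OF r p wt])
    moreover have "(\<Sum>a\<in>S. D a * G' a) = (\<Sum>a\<in>S. D a * G a)"
      by (rule sum.cong) (auto simp: G'_def)
    ultimately show ?thesis by simp
  qed
  have nonneg: "0 \<le> f (w0, w1)" if "w0 \<in> gleaves t" "w1 \<in> B (leaf_label t w0)" for w0 w1
  proof -
    have "w1 \<in> gleaves (s (leaf_label t w0))" using B that(2) by blast
    then show ?thesis using that(1) gpath_prob_nonneg[OF p wt] gpath_prob_nonneg[OF p ws]
      unfolding f_def gleaves_def by (auto intro!: mult_nonneg_nonneg)
  qed
  have "(f has_sum (\<Sum>a\<in>S. D a * G a)) (Sigma (gleaves t) (\<lambda>w0. B (leaf_label t w0)))"
  proof (rule has_sum_SigmaI[OF _ outer])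
    show "f summable_on Sigma (gleaves t) (\<lambda>w0. B (leaf_label t w0))"
      by (rule summable_on_SigmaI[OF _ has_sum_imp_summable[OF outer]]) (use inner nonneg in auto)
  qed (use inner in auto)
  then have "((gpath_prob (gbind t s) p \<circ> (\<lambda>(x,y). x @ y)) has_sum (\<Sum>a\<in>S. D a * G a)) (Sigma (gleaves t) (\<lambda>w0. B (leaf_label t w0)))"
    by (subst has_sum_cong[where g=f]) (auto simp: f_def gpath_prob_gbind)
  then show ?thesis unfolding eqset by (subst has_sum_reindex[OF inj])
qed

lemma output_dist_gbind:
  assumes p: "p \<in> unit_cube" and wt: "wf_gtree t" and ws: "\<And>a. wf_gtree (s a)" and r: "output_dist t p S D"
    and rs: "\<And>a. a \<in> S \<Longrightarrow> D a \<noteq> 0 \<Longrightarrow> output_dist (s a) p (S' a) (E a)"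
  shows "output_dist (gbind t s) p (\<Union>a\<in>{a\<in>S. D a \<noteq> 0}. S' a) (\<lambda>c. \<Sum>a\<in>S. D a * E a c)"
  unfolding output_dist_def
proof (intro conjI allI impI)
  show "finite (\<Union>a\<in>{a\<in>S. D a \<noteq> 0}. S' a)" using r rs by (auto simp: output_dist_def)
next
  fix c assume c: "c \<notin> (\<Union>a\<in>{a\<in>S. D a \<noteq> 0}. S' a)"
  show "(\<Sum>a\<in>S. D a * E a c) = 0"
  proof (rule sum.neutral, intro ballI)
    fix a assume "a \<in> S"
    then show "D a * E a c = 0" using c rs[of a] by (cases "D a = 0") (auto simp: output_dist_def)
  qed
next
  have "(gpath_prob (gbind t s) p has_sum (\<Sum>a\<in>S. D a * 1)) (gleaves (gbind t s))"
    unfolding gleaves_gbind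
    by (rule has_sum_gbind[OF p wt ws r]) (use rs in \<open>auto simp: output_dist_def\<close>)
  then show "(gpath_prob (gbind t s) p has_sum 1) (gleaves (gbind t s))"
    using output_dist_sum_eq_1[OF r p wt] by simp
next
  fix c
  show "(gpath_prob (gbind t s) p has_sum (\<Sum>a\<in>S. D a * E a c)) (gleaf_paths (gbind t s) c)"
    unfolding gleaf_paths_gbind
    by (rule has_sum_gbind[OF p wt ws r, where B="\<lambda>a. gleaf_paths (s a) c"]) (use rs gleaf_pathsD in \<open>auto simp: output_dist_def\<close>)
qed

definition first_leaf_len :: "('n,'a) gtree \<Rightarrow> bool list \<Rightarrow> nat" where
  "first_leaf_len b w = (LEAST j. take j w \<in> gleaves b)"

lemma first_leaf_len_le: "take j w \<in> gleaves b \<Longrightarrow> j \<le> length w \<Longrightarrow> first_leaf_len b w \<le> length w"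
  unfolding first_leaf_len_def by (meson Least_le le_trans)

text \<open>Run the body b until it outputs Some a, then output a; the output None means retry.
  If the root of b is a leaf None the retry would consume no flip, so a junk leaf is returned;
  otherwise grepeat b is the fixed point gbind b (repeat_step b) (see grepeat_unfold).\<close>

function grepeat :: "('n,'a option) gtree \<Rightarrow> bool list \<Rightarrow> ('n,'a) gnode" where
  "grepeat b w =
    (if \<exists>j\<le>length w. take j w \<in> gleaves b then
       (let j = first_leaf_len b w in
        if leaf_label b (take j w) = None \<and> j \<noteq> 0 then grepeat b (drop j w)
        else if leaf_label b (take j w) = None then GLeaf undefined
        else GLeaf (the (leaf_label b (take j w))))
     else forget_label (b w))"
  by pat_completeness auto
termination
  by (relation "Wellfounded.measure (\<lambda>(b,w). length w)") (auto dest: first_leaf_len_le)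

declare grepeat.simps[simp del]

definition repeat_step :: "('n,'a option) gtree \<Rightarrow> 'a option \<Rightarrow> ('n,'a) gtree" where
  "repeat_step b x = (case x of None \<Rightarrow> grepeat b | Some a \<Rightarrow> leaf_tree a)"

lemma Nil_notin_gleaves: "ginternal (b []) \<Longrightarrow> [] \<notin> gleaves b"
  by (simp add: gleaves_def)

lemma grepeat_unfold:
  assumes "ginternal (b [])"
  shows "grepeat b = gbind b (repeat_step b)"
proof
  fix w
  show "grepeat b w = gbind b (repeat_step b) w"
  proof (cases "\<exists>j\<le>length w. take j w \<in> gleaves b")
    case True
    have ne: "first_leaf_len b w \<noteq> 0"
    proof
      assume "first_leaf_len b w = 0"
      moreover have "take (first_leaf_len b w) w \<in> gleaves b" unfolding first_leaf_len_def using True by (metis LeastI)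
      ultimately show False using Nil_notin_gleaves[of b, OF assms] by simp
    qed
    have gb: "gbind b (repeat_step b) w = repeat_step b (leaf_label b (take (first_leaf_len b w) w)) (drop (first_leaf_len b w) w)"
      using True by (simp add: gbind_def Let_def first_leaf_len_def)
    show ?thesis
    proof (cases "leaf_label b (take (first_leaf_len b w) w)")
      case None
      have "grepeat b w = grepeat b (drop (first_leaf_len b w) w)"
        by (subst grepeat.simps[of b w]) (simp only: Let_def True None ne simp_thms if_True)
      then show ?thesis using gb None by (simp add: repeat_step_def)
    next
      case (Some a)
      have "grepeat b w = GLeaf a"
        by (subst grepeat.simps[of b w]) (simp only: Let_def True Some ne simp_thms if_True if_False option.distinct option.sel)
      then show ?thesis using gb Some by (simp add: repeat_step_def leaf_tree_def)
    qed
  next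
    case False
    have "grepeat b w = forget_label (b w)"
      by (subst grepeat.simps[of b w]) (simp only: False if_False)
    then show ?thesis using gbind_before_leaf[of w b "repeat_step b"] False by simp
  qed
qed


lemma repeat_step_simps[simp]: "repeat_step b None = grepeat b" "repeat_step b (Some a) = leaf_tree a"
  by (simp_all add: repeat_step_def)

lemma leaf_label_gbind_append: "w0 \<in> gleaves t \<Longrightarrow> leaf_label (gbind t s) (w0 @ w1) = leaf_label (s (leaf_label t w0)) w1"
  by (simp add: leaf_label_def gbind_append_leaf)

definition exit_leaves :: "('n,'a option) gtree \<Rightarrow> 'a set \<Rightarrow> bool list set" where
  "exit_leaves b A = {w \<in> gleaves b. \<exists>a\<in>A. leaf_label b w = Some a}"

fun retry_paths :: "('n,'a option) gtree \<Rightarrow> bool list set \<Rightarrow> nat \<Rightarrow> bool list set" where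
  "retry_paths b Y 0 = Y"
| "retry_paths b Y (Suc k) = {w. \<exists>w0 w1. w = w0 @ w1 \<and> w0 \<in> gleaf_paths b None \<and> w1 \<in> retry_paths b Y k}"

lemma grepeat_leaf_iff_step:
  assumes "ginternal (b [])"
  shows "(w \<in> gleaves (grepeat b) \<and> leaf_label (grepeat b) w \<in> A) \<longleftrightarrow>
    (w \<in> exit_leaves b A \<or> (\<exists>w0 w1. w = w0 @ w1 \<and> w0 \<in> gleaf_paths b None \<and> w1 \<in> gleaves (grepeat b) \<and> leaf_label (grepeat b) w1 \<in> A))"
    (is "?L \<longleftrightarrow> ?R")
proof
  assume L: ?L
  have "w \<in> gleaves (gbind b (repeat_step b))" using L grepeat_unfold[of b, OF assms] by simp
  then obtain w0 w1 where h: "w = w0 @ w1" "w0 \<in> gleaves b" "w1 \<in> gleaves (repeat_step b (leaf_label b w0))"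
    unfolding gleaves_gbind by blast
  have lab: "leaf_label (grepeat b) w = leaf_label (repeat_step b (leaf_label b w0)) w1"
    using leaf_label_gbind_append[OF h(2), of "repeat_step b" w1] h(1) grepeat_unfold[of b, OF assms] by simp
  show ?R
  proof (cases "leaf_label b w0")
    case None
    then have "w0 \<in> gleaf_paths b None" using gleaf_paths_leaf_label[OF h(2)] by simp
    then show ?thesis using h None L lab by auto
  next
    case (Some a)
    then have "w1 = []" using h(3) by simp
    then have "leaf_label (grepeat b) w = a" using lab Some by (simp add: leaf_label_def leaf_tree_def)
    then show ?thesis using L h Some \<open>w1 = []\<close> by (auto simp: exit_leaves_def)
  qed
next
  assume R: ?R
  show ?L
  proof (cases "w \<in> exit_leaves b A")
    case True
    then obtain a where a: "w \<in> gleaves b" "leaf_label b w = Some a" "a \<in> A" by (auto simp: exit_leaves_def)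
    have "w @ [] \<in> gleaves (gbind b (repeat_step b))" unfolding gleaves_gbind
      by (intro CollectI exI[of _ w] exI[of _ "[]"]) (use a in simp)
    moreover have "leaf_label (gbind b (repeat_step b)) (w @ []) = a"
      using leaf_label_gbind_append[OF a(1), of "repeat_step b" "[]"] a by (simp add: leaf_label_def leaf_tree_def)
    ultimately show ?thesis using grepeat_unfold[of b, OF assms] a by simp
  next
    case False
    then obtain w0 w1 where h: "w = w0 @ w1" "w0 \<in> gleaf_paths b None" "w1 \<in> gleaves (grepeat b)" "leaf_label (grepeat b) w1 \<in> A"
      using R by blast
    have w0: "w0 \<in> gleaves b" "leaf_label b w0 = None" using gleaf_pathsD[OF h(2)] leaf_label_gleaf_paths[OF h(2)] by blast+
    have "w \<in> gleaves (gbind b (repeat_step b))" unfolding gleaves_gbind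
      by (intro CollectI exI[of _ w0] exI[of _ w1]) (use h w0 in simp)
    moreover have "leaf_label (gbind b (repeat_step b)) w = leaf_label (grepeat b) w1"
      using leaf_label_gbind_append[OF w0(1), of "repeat_step b" w1] h w0 by simp
    ultimately show ?thesis using grepeat_unfold[of b, OF assms] h by simp
  qed
qed

lemma gleaves_nonempty: "ginternal (b []) \<Longrightarrow> w0 \<in> gleaves b \<Longrightarrow> w0 \<noteq> []"
  using Nil_notin_gleaves by blast

lemma grepeat_leaf_iff:
  assumes "ginternal (b [])"
  shows "(w \<in> gleaves (grepeat b) \<and> leaf_label (grepeat b) w \<in> A) \<longleftrightarrow> w \<in> (\<Union>k. retry_paths b (exit_leaves b A) k)"
proof
  show "w \<in> gleaves (grepeat b) \<and> leaf_label (grepeat b) w \<in> A \<Longrightarrow> w \<in> (\<Union>k. retry_paths b (exit_leaves b A) k)"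
  proof (induction "length w" arbitrary: w rule: less_induct)
    case less
    have "w \<in> exit_leaves b A \<or> (\<exists>w0 w1. w = w0 @ w1 \<and> w0 \<in> gleaf_paths b None \<and> w1 \<in> gleaves (grepeat b) \<and> leaf_label (grepeat b) w1 \<in> A)"
      using less.prems grepeat_leaf_iff_step[of b, OF assms] by blast
    then show ?case
    proof (elim disjE exE conjE)
      assume "w \<in> exit_leaves b A" then show ?thesis by (auto intro: exI[of _ 0])
    next
      fix w0 w1 assume h: "w = w0 @ w1" "w0 \<in> gleaf_paths b None" "w1 \<in> gleaves (grepeat b)" "leaf_label (grepeat b) w1 \<in> A"
      have "w0 \<noteq> []" using gleaves_nonempty[of b, OF assms gleaf_pathsD[OF h(2)]] .
      then have "length w1 < length w" using h(1) by simp
      then have "w1 \<in> (\<Union>k. retry_paths b (exit_leaves b A) k)" using less.hyps h(3,4) by blast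
      then obtain k where "w1 \<in> retry_paths b (exit_leaves b A) k" by blast
      then have "w \<in> retry_paths b (exit_leaves b A) (Suc k)" using h by auto
      then show ?thesis by blast
    qed
  qed
next
  assume "w \<in> (\<Union>k. retry_paths b (exit_leaves b A) k)"
  then obtain k where "w \<in> retry_paths b (exit_leaves b A) k" by blast
  then show "w \<in> gleaves (grepeat b) \<and> leaf_label (grepeat b) w \<in> A"
  proof (induction k arbitrary: w)
    case 0 then show ?case using grepeat_leaf_iff_step[of b, OF assms, of w A] by simp
  next
    case (Suc k)
    then obtain w0 w1 where h: "w = w0 @ w1" "w0 \<in> gleaf_paths b None" "w1 \<in> retry_paths b (exit_leaves b A) k" by auto
    then show ?case using Suc.IH[OF h(3)] grepeat_leaf_iff_step[of b, OF assms, of w A] by blast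
  qed
qed

lemma wf_gtree_grepeat:
  assumes "wf_gtree b" "ginternal (b [])"
  shows "wf_gtree (grepeat b)"
  unfolding wf_gtree_def
proof (intro allI impI)
  fix w c
  assume "greached (grepeat b) w \<and> grepeat b w = GConst c"
  then show "0 < c \<and> c < 1"
  proof (induction "length w" arbitrary: w rule: less_induct)
    case less
    have r: "greached (gbind b (repeat_step b)) w" and v: "gbind b (repeat_step b) w = GConst c"
      using less.prems grepeat_unfold[of b, OF assms(2)] by auto
    from greached_gbind_cases[OF r] show ?case
    proof (elim disjE exE conjE)
      fix w0 w1 assume a: "w0 \<in> gleaves b" "w = w0 @ w1"
      then have r1: "greached (repeat_step b (leaf_label b w0)) w1" and v1: "repeat_step b (leaf_label b w0) w1 = GConst c"
        using r v greached_gbind_append[OF a(1), where s="repeat_step b"] gbind_append_leaf[OF a(1), where s="repeat_step b"] by auto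
      show ?thesis
      proof (cases "leaf_label b w0")
        case None
        have "w0 \<noteq> []" using gleaves_nonempty[of b, OF assms(2) a(1)] .
        then have "length w1 < length w" using a(2) by simp
        then show ?thesis using less.hyps r1 v1 None by simp
      next
        case (Some a)
        then show ?thesis using v1 by (simp add: leaf_tree_def)
      qed
    next
      assume "greached b w" "\<forall>j\<le>length w. take j w \<notin> gleaves b"
      then show ?thesis using v gbind_before_leaf[of w b "repeat_step b"] assms(1) by (auto simp: wf_gtree_def)
    qed
  qed
qed

lemma retry_paths_mono: "Y \<subseteq> Y' \<Longrightarrow> retry_paths b Y k \<subseteq> retry_paths b Y' k"
  by (induction k) auto

lemma subset_exit_leaves_UNIV: "Y \<subseteq> gleaves b \<Longrightarrow> Y \<inter> gleaf_paths b None = {} \<Longrightarrow> Y \<subseteq> exit_leaves b UNIV"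
  unfolding exit_leaves_def
proof (intro subsetI CollectI conjI)
  fix w assume "Y \<subseteq> gleaves b" "Y \<inter> gleaf_paths b None = {}" "w \<in> Y"
  then have "w \<in> gleaves b" "leaf_label b w \<noteq> None" using gleaf_paths_leaf_label by fastforce+
  then show "w \<in> gleaves b" "\<exists>a\<in>UNIV. leaf_label b w = Some a" by auto
qed

lemma retry_paths_subset:
  assumes "ginternal (b [])" "Y \<subseteq> gleaves b" "Y \<inter> gleaf_paths b None = {}"
  shows "retry_paths b Y k \<subseteq> gleaves (grepeat b)"
proof
  fix w assume "w \<in> retry_paths b Y k"
  then have "w \<in> retry_paths b (exit_leaves b UNIV) k" using retry_paths_mono[OF subset_exit_leaves_UNIV[OF assms(2,3)]] by blast
  then show "w \<in> gleaves (grepeat b)" using grepeat_leaf_iff[of b, OF assms(1), of w UNIV] by blast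
qed

lemma retry_paths_Suc_notin_exit:
  assumes "Y \<subseteq> gleaves b" "Y \<inter> gleaf_paths b None = {}"
    and "w0 \<in> gleaf_paths b None" "w0 @ w1 \<in> Y"
  shows False
proof -
  have "w0 @ w1 = w0"
    using gleaves_prefix_eq[of w0 b "w0 @ w1"] gleaf_pathsD[OF assms(3)] assms(1,4) by auto
  then show False using assms(2-4) by auto
qed

lemma retry_paths_disjoint:
  assumes "Y \<subseteq> gleaves b" "Y \<inter> gleaf_paths b None = {}"
  shows "i \<noteq> j \<Longrightarrow> retry_paths b Y i \<inter> retry_paths b Y j = {}"
proof (induction i arbitrary: j)
  case 0
  then obtain j' where "j = Suc j'" by (cases j) auto
  then show ?case using retry_paths_Suc_notin_exit[OF assms] by auto
next
  case (Suc i)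
  show ?case
  proof (cases j)
    case 0
    then show ?thesis using retry_paths_Suc_notin_exit[OF assms] by auto
  next
    case (Suc j')
    then have ne: "i \<noteq> j'" using Suc.prems by simp
    show ?thesis
    proof (rule ccontr)
      assume "retry_paths b Y (Suc i) \<inter> retry_paths b Y j \<noteq> {}"
      then obtain w0 w1 w0' w1' where h: "w0 @ w1 = w0' @ w1'" "w0 \<in> gleaf_paths b None"
        "w1 \<in> retry_paths b Y i" "w0' \<in> gleaf_paths b None" "w1' \<in> retry_paths b Y j'"
        using Suc by auto
      then have "w1 = w1'"
        using gleaves_append_eq[OF gleaf_pathsD[OF h(2)] gleaf_pathsD[OF h(4)] h(1)] by blast
      then show False using Suc.IH[OF ne] h by blast
    qed
  qed
qed
lemma gleaf_paths_iff: "w \<in> gleaves t \<Longrightarrow> w \<in> gleaf_paths t a \<longleftrightarrow> leaf_label t w = a"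
  using gleaf_paths_leaf_label leaf_label_gleaf_paths by metis

lemma wf_gtree_repeat_step: "wf_gtree b \<Longrightarrow> ginternal (b []) \<Longrightarrow> wf_gtree (repeat_step b x)"
  by (cases x) (simp_all add: wf_gtree_grepeat)

lemma retry_paths_Suc_eq:
  "retry_paths b Y (Suc k) = {w. \<exists>w0 w1. w = w0 @ w1 \<and> w0 \<in> gleaves b \<and>
       w1 \<in> (if leaf_label b w0 = None then retry_paths b Y k else {})}"
proof (intro set_eqI iffI)
  fix w assume "w \<in> retry_paths b Y (Suc k)"
  then obtain w0 w1 where h: "w = w0 @ w1" "w0 \<in> gleaf_paths b None" "w1 \<in> retry_paths b Y k" by auto
  then show "w \<in> {w. \<exists>w0 w1. w = w0 @ w1 \<and> w0 \<in> gleaves b \<and>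
      w1 \<in> (if leaf_label b w0 = None then retry_paths b Y k else {})}"
    using gleaf_pathsD[OF h(2)] leaf_label_gleaf_paths[OF h(2)] by auto
next
  fix w assume "w \<in> {w. \<exists>w0 w1. w = w0 @ w1 \<and> w0 \<in> gleaves b \<and>
      w1 \<in> (if leaf_label b w0 = None then retry_paths b Y k else {})}"
  then obtain w0 w1 where h: "w = w0 @ w1" "w0 \<in> gleaves b" "leaf_label b w0 = None"
      "w1 \<in> retry_paths b Y k"
    by (auto split: if_splits)
  then show "w \<in> retry_paths b Y (Suc k)" using gleaf_paths_leaf_label[OF h(2)] by auto
qed

lemma output_dist_sum_delta:
  assumes "output_dist t p S D"
  shows "(\<Sum>a\<in>S. D a * (if a = x then c else 0)) = D x * c"
proof (cases "x \<in> S")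
  case True
  then show ?thesis using assms by (simp add: if_distrib[of "(*) _"] sum.delta output_dist_def cong: if_cong)
next
  case False
  then show ?thesis using assms by (auto simp: output_dist_def intro: sum.neutral)
qed

lemma has_sum_retry_paths:
  assumes p: "p \<in> unit_cube" and wb: "wf_gtree b" and ib: "ginternal (b [])" and r: "output_dist b p S D"
    and Ys: "Y \<subseteq> gleaves b" and Yn: "Y \<inter> gleaf_paths b None = {}" and Q: "(gpath_prob b p has_sum Q) Y"
  shows "(gpath_prob (grepeat b) p has_sum (D None ^ k * Q)) (retry_paths b Y k)"
proof (induction k)
  case 0
  have "gpath_prob (grepeat b) p w = gpath_prob b p w" if "w \<in> Y" for w
  proof -
    have w: "w \<in> gleaves b" using that Ys by blast
    have "gpath_prob (grepeat b) p (w @ []) = gpath_prob b p w * gpath_prob (repeat_step b (leaf_label b w)) p []"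
      using gpath_prob_gbind[OF w, of "repeat_step b" p "[]"] grepeat_unfold[of b, OF ib] by simp
    then show ?thesis by simp
  qed
  then show ?case using Q by (subst has_sum_cong[where g="gpath_prob b p"]) auto
next
  case (Suc k)
  have "(gpath_prob (gbind b (repeat_step b)) p has_sum (\<Sum>a\<in>S. D a * (if a = None then D None ^ k * Q else 0)))
      {w. \<exists>w0 w1. w = w0 @ w1 \<and> w0 \<in> gleaves b \<and>
          w1 \<in> (if leaf_label b w0 = None then retry_paths b Y k else {})}"
  proof (rule has_sum_gbind[OF p wb _ r])
    show "wf_gtree (repeat_step b a)" for a using wf_gtree_repeat_step[OF wb ib] .
    show "(if a = None then retry_paths b Y k else {}) \<subseteq> gleaves (repeat_step b a)" for a
      using retry_paths_subset[OF ib Ys Yn] by (cases a) auto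
    show "(gpath_prob (repeat_step b a) p has_sum (if a = None then D None ^ k * Q else 0))
        (if a = None then retry_paths b Y k else {})" for a
      using Suc.IH by (cases a) auto
  qed
  then show ?case
    unfolding retry_paths_Suc_eq output_dist_sum_delta[OF r] grepeat_unfold[of b, OF ib, symmetric]
    by (simp only: power_Suc mult.assoc)
qed

lemma has_sum_UN_retry_paths:
  assumes p: "p \<in> unit_cube" and wb: "wf_gtree b" and ib: "ginternal (b [])" and r: "output_dist b p S D"
    and Ys: "Y \<subseteq> gleaves b" and Yn: "Y \<inter> gleaf_paths b None = {}" and Q: "(gpath_prob b p has_sum Q) Y"
    and R: "D None < 1"
  shows "(gpath_prob (grepeat b) p has_sum (Q / (1 - D None))) (\<Union>k. retry_paths b Y k)"
proof -
  have R0: "0 \<le> D None" using output_dist_nonneg[OF r p wb] .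
  have Q0: "0 \<le> Q" using Q by (rule has_sum_nonneg) (use Ys gpath_prob_nonneg[OF p wb] in \<open>auto simp: gleaves_def\<close>)
  have geo: "((\<lambda>k. D None ^ k * Q) has_sum (Q / (1 - D None))) UNIV"
  proof (rule sums_nonneg_imp_has_sum)
    have "(\<lambda>k. D None ^ k) sums (1 / (1 - D None))" using geometric_sums[of "D None"] R0 R by simp
    then have "(\<lambda>k. D None ^ k * Q) sums (1 / (1 - D None) * Q)" by (rule sums_mult2)
    then show "(\<lambda>k. D None ^ k * Q) sums (Q / (1 - D None))" by simp
    show "0 \<le> D None ^ n * Q" for n using R0 Q0 by simp
  qed
  have wl: "wf_gtree (grepeat b)" using wf_gtree_grepeat[OF wb ib] .
  have eq: "(\<Union>k. retry_paths b Y k) = snd ` Sigma UNIV (retry_paths b Y)" by force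
  have inj: "inj_on snd (Sigma UNIV (retry_paths b Y))"
    unfolding inj_on_def
  proof (intro ballI impI)
    fix x y assume h: "x \<in> Sigma UNIV (retry_paths b Y)" "y \<in> Sigma UNIV (retry_paths b Y)" "snd x = snd y"
    obtain k w k' w' where xy: "x = (k, w)" "y = (k', w')" by (cases x, cases y)
    have "w \<in> retry_paths b Y k" "w \<in> retry_paths b Y k'" using h xy by auto
    then have "k = k'" using retry_paths_disjoint[OF Ys Yn, of k k'] by blast
    then show "x = y" using h xy by simp
  qed
  have "((\<lambda>(k,w). gpath_prob (grepeat b) p w) has_sum (Q / (1 - D None))) (Sigma UNIV (retry_paths b Y))"
  proof (rule has_sum_SigmaI[OF _ geo])
    show "((\<lambda>w. case (k, w) of (k, w) \<Rightarrow> gpath_prob (grepeat b) p w) has_sum D None ^ k * Q) (retry_paths b Y k)" for k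
      using has_sum_retry_paths[OF p wb ib r Ys Yn Q, of k] by simp
    show "(\<lambda>(k, w). gpath_prob (grepeat b) p w) summable_on Sigma UNIV (retry_paths b Y)"
    proof (rule summable_on_SigmaI[OF _ has_sum_imp_summable[OF geo]])
      show "((\<lambda>w. case (k, w) of (k, w) \<Rightarrow> gpath_prob (grepeat b) p w) has_sum D None ^ k * Q) (retry_paths b Y k)" for k
        using has_sum_retry_paths[OF p wb ib r Ys Yn Q, of k] by simp
      show "0 \<le> (case (k, w) of (k, w) \<Rightarrow> gpath_prob (grepeat b) p w)" if "k \<in> UNIV" "w \<in> retry_paths b Y k" for k w
        using retry_paths_subset[OF ib Ys Yn] that gpath_prob_nonneg[OF p wl] by (auto simp: gleaves_def)
    qed
  qed
  then have "((gpath_prob (grepeat b) p \<circ> snd) has_sum (Q / (1 - D None))) (Sigma UNIV (retry_paths b Y))"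
    by (simp add: o_def case_prod_unfold)
  then show ?thesis unfolding eq by (subst has_sum_reindex[OF inj])
qed

lemma exit_leaves_UNIV: "exit_leaves b UNIV = gleaves b - gleaf_paths b None"
proof (intro set_eqI iffI)
  fix w assume "w \<in> exit_leaves b UNIV"
  then obtain a where w: "w \<in> gleaves b" "leaf_label b w = Some a" unfolding exit_leaves_def by blast
  then show "w \<in> gleaves b - gleaf_paths b None" using gleaf_paths_iff[OF w(1), of None] by simp
next
  fix w assume h: "w \<in> gleaves b - gleaf_paths b None"
  then have "leaf_label b w \<noteq> None" using gleaf_paths_iff[of w b None] by auto
  then show "w \<in> exit_leaves b UNIV" using h unfolding exit_leaves_def by auto
qed

lemma exit_leaves_singleton: "exit_leaves b {c} = gleaf_paths b (Some c)"
proof (intro set_eqI iffI)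
  fix w assume "w \<in> exit_leaves b {c}"
  then have w: "w \<in> gleaves b" "leaf_label b w = Some c" unfolding exit_leaves_def by auto
  then show "w \<in> gleaf_paths b (Some c)" using gleaf_paths_iff[OF w(1), of "Some c"] by simp
next
  fix w assume w: "w \<in> gleaf_paths b (Some c)"
  then show "w \<in> exit_leaves b {c}"
    unfolding exit_leaves_def using gleaf_pathsD[OF w] leaf_label_gleaf_paths[OF w] by auto
qed

lemma gleaf_paths_grepeat:
  assumes "ginternal (b [])"
  shows "gleaf_paths (grepeat b) c = (\<Union>k. retry_paths b (exit_leaves b {c}) k)"
proof -
  have "w \<in> gleaf_paths (grepeat b) c \<longleftrightarrow> w \<in> gleaves (grepeat b) \<and> leaf_label (grepeat b) w \<in> {c}" for w
    by (auto simp: gleaf_paths_eq leaf_label_def gleaves_def ginternal_def split: gnode.splits)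
  then show ?thesis using grepeat_leaf_iff[of b, OF assms, where A="{c}"] by blast
qed

lemma output_dist_grepeat:
  assumes p: "p \<in> unit_cube" and wb: "wf_gtree b" and ib: "ginternal (b [])" and r: "output_dist b p S D"
    and R: "D None < 1"
  shows "output_dist (grepeat b) p (Some -` S) (\<lambda>a. D (Some a) / (1 - D None))"
  unfolding output_dist_def
proof (intro conjI allI impI)
  show "finite (Some -` S)" using r by (auto simp: output_dist_def intro: finite_vimageI)
next
  fix a assume "a \<notin> Some -` S"
  then show "D (Some a) / (1 - D None) = 0" using r by (simp add: output_dist_def)
next
  have "(gpath_prob b p has_sum 1) (gleaves b)" "(gpath_prob b p has_sum D None) (gleaf_paths b None)"
    using r by (auto simp: output_dist_def)
  then have Q: "(gpath_prob b p has_sum (1 - D None)) (exit_leaves b UNIV)"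
    unfolding exit_leaves_UNIV by (rule has_sum_Diff) (rule gleaf_paths_subset)
  have "(gpath_prob (grepeat b) p has_sum ((1 - D None) / (1 - D None)))
      (\<Union>k. retry_paths b (exit_leaves b UNIV) k)"
    by (rule has_sum_UN_retry_paths[OF p wb ib r _ _ Q R]) (auto simp: exit_leaves_def gleaf_paths_def leaf_label_def)
  moreover have "gleaves (grepeat b) = (\<Union>k. retry_paths b (exit_leaves b UNIV) k)"
    using grepeat_leaf_iff[of b, OF ib, where A=UNIV] by blast
  ultimately show "(gpath_prob (grepeat b) p has_sum 1) (gleaves (grepeat b))" using R by simp
next
  fix c
  have Q: "(gpath_prob b p has_sum D (Some c)) (exit_leaves b {c})"
    unfolding exit_leaves_singleton using r by (simp add: output_dist_def)
  show "(gpath_prob (grepeat b) p has_sum D (Some c) / (1 - D None)) (gleaf_paths (grepeat b) c)"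
    unfolding gleaf_paths_grepeat[of b, OF ib]
    by (rule has_sum_UN_retry_paths[OF p wb ib r _ _ Q R]) (auto simp: exit_leaves_def gleaf_paths_def leaf_label_def)
qed

lemma output_dist_cong:
  assumes "output_dist t p S D" "S \<subseteq> S'" "finite S'" "\<And>a. D a = D' a"
  shows "output_dist t p S' D'"
proof -
  have "D = D'" using assms(4) by auto
  then show ?thesis using assms(1-3) unfolding output_dist_def by auto
qed

definition bern_tree :: "real \<Rightarrow> 'a \<Rightarrow> 'a \<Rightarrow> ('n,'a) gtree" where
  "bern_tree c x y = (if c \<le> 0 then leaf_tree y else if 1 \<le> c then leaf_tree x else branch (GConst c) (leaf_tree y) (leaf_tree x))"

lemma wf_gtree_bern_tree: "wf_gtree (bern_tree c x y)"
  unfolding bern_tree_def by (auto intro!: wf_gtree_branch)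

lemma output_dist_bern_tree:
  fixes p :: "real ^ 'n" and x y :: 'a
  assumes "0 \<le> c" "c \<le> 1"
  shows "output_dist (bern_tree c x y) p {x, y} (\<lambda>a. (if a = x then c else 0) + (if a = y then 1 - c else 0))"
proof (cases "c \<le> 0")
  case True
  then have c: "c = 0" using assms by simp
  have g: "bern_tree c x y = leaf_tree y" using True by (simp add: bern_tree_def)
  show ?thesis unfolding g by (rule output_dist_cong[OF output_dist_leaf_tree]) (auto simp: c)
next
  case False
  show ?thesis
  proof (cases "1 \<le> c")
    case True
    then have c: "c = 1" using assms by simp
    have g: "bern_tree c x y = leaf_tree x" using True False by (simp add: bern_tree_def)
    show ?thesis unfolding g by (rule output_dist_cong[OF output_dist_leaf_tree]) (auto simp: c)
  next
    case F2: False
    have r: "output_dist (branch (GConst c) (leaf_tree y) (leaf_tree x)) p ({y} \<union> {x})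
            (\<lambda>a. (1 - c) * (if a = y then 1 else 0) + c * (if a = x then 1 else 0))"
    proof -
      have "output_dist (branch (GConst c) (leaf_tree y) (leaf_tree x)) p ({y} \<union> {x})
            (\<lambda>a. (1 - gcoin_prob p (GConst c :: ('n,'a) gnode)) * (if a = y then 1 else 0) + gcoin_prob p (GConst c :: ('n,'a) gnode) * (if a = x then 1 else 0))"
        by (rule output_dist_branch) (simp_all add: output_dist_leaf_tree)
      then show ?thesis by simp
    qed
    have g: "bern_tree c x y = branch (GConst c) (leaf_tree y) (leaf_tree x)" using F2 False by (simp add: bern_tree_def)
    show ?thesis unfolding g by (rule output_dist_cong[OF r]) auto
  qed
qed


definition vec_set :: "real ^ 'n \<Rightarrow> 'n \<Rightarrow> real \<Rightarrow> real ^ 'n" where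
  "vec_set v i r = (\<chi> j. if j = i then r else v $ j)"

fun cube_tree :: "'n list \<Rightarrow> real ^ 'n \<Rightarrow> ('n, real ^ 'n) gtree" where
  "cube_tree [] v = leaf_tree v"
| "cube_tree (i # is) v = branch (GCoin i) (cube_tree is (vec_set v i 0)) (cube_tree is (vec_set v i 1))"

lemma wf_gtree_cube_tree: "wf_gtree (cube_tree is v)"
  by (induction "is" arbitrary: v) (auto intro!: wf_gtree_branch)

lemma output_dist_cube_tree:
  assumes p: "p \<in> unit_cube"
  shows "distinct is \<Longrightarrow> \<exists>S D. output_dist (cube_tree is v) p S D \<and>
     (\<Sum>a\<in>S. D a *\<^sub>R a) = (\<chi> j. if j \<in> set is then p $ j else v $ j) \<and>
     (\<forall>a\<in>S. D a \<noteq> 0 \<longrightarrow> (\<forall>j. j \<notin> set is \<longrightarrow> a $ j = v $ j) \<and> (\<forall>j\<in>set is. a $ j = 0 \<or> a $ j = 1))"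
proof (induction "is" arbitrary: v)
  case Nil
  show ?case
    by (rule exI[of _ "{v}"], rule exI[of _ "\<lambda>b. if b = v then 1 else 0"]) (simp add: output_dist_leaf_tree)
next
  case (Cons i "is")
  then have ni: "i \<notin> set is" and d: "distinct is" by auto
  obtain S0 D0 where h0: "output_dist (cube_tree is (vec_set v i 0)) p S0 D0"
    "(\<Sum>a\<in>S0. D0 a *\<^sub>R a) = (\<chi> j. if j \<in> set is then p $ j else vec_set v i 0 $ j)"
    "\<forall>a\<in>S0. D0 a \<noteq> 0 \<longrightarrow> (\<forall>j. j \<notin> set is \<longrightarrow> a $ j = vec_set v i 0 $ j) \<and> (\<forall>j\<in>set is. a $ j = 0 \<or> a $ j = 1)"
    using Cons.IH[OF d] by blast
  obtain S1 D1 where h1: "output_dist (cube_tree is (vec_set v i 1)) p S1 D1"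
    "(\<Sum>a\<in>S1. D1 a *\<^sub>R a) = (\<chi> j. if j \<in> set is then p $ j else vec_set v i 1 $ j)"
    "\<forall>a\<in>S1. D1 a \<noteq> 0 \<longrightarrow> (\<forall>j. j \<notin> set is \<longrightarrow> a $ j = vec_set v i 1 $ j) \<and> (\<forall>j\<in>set is. a $ j = 0 \<or> a $ j = 1)"
    using Cons.IH[OF d] by blast
  define q where "q = p $ i"
  have r: "output_dist (cube_tree (i # is) v) p (S0 \<union> S1) (\<lambda>a. (1 - q) * D0 a + q * D1 a)"
    using output_dist_branch[OF _ h0(1) h1(1), of "GCoin i"] by (simp add: q_def)
  have fin: "finite S0" "finite S1" using h0(1) h1(1) by (auto simp: output_dist_def)
  have z0: "\<And>a. a \<notin> S0 \<Longrightarrow> D0 a = 0" and z1: "\<And>a. a \<notin> S1 \<Longrightarrow> D1 a = 0"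
    using h0(1) h1(1) by (auto simp: output_dist_def)
  have "(\<Sum>a\<in>S0 \<union> S1. ((1 - q) * D0 a + q * D1 a) *\<^sub>R a)
      = (1 - q) *\<^sub>R (\<Sum>a\<in>S0 \<union> S1. D0 a *\<^sub>R a) + q *\<^sub>R (\<Sum>a\<in>S0 \<union> S1. D1 a *\<^sub>R a)"
    by (simp add: scaleR_add_left sum.distrib scaleR_sum_right)
  also have "\<dots> = (1 - q) *\<^sub>R (\<Sum>a\<in>S0. D0 a *\<^sub>R a) + q *\<^sub>R (\<Sum>a\<in>S1. D1 a *\<^sub>R a)"
  proof -
    have "(\<Sum>a\<in>S0 \<union> S1. D0 a *\<^sub>R a) = (\<Sum>a\<in>S0. D0 a *\<^sub>R a)"
      by (rule sum.mono_neutral_right) (use fin z0 in auto)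
    moreover have "(\<Sum>a\<in>S0 \<union> S1. D1 a *\<^sub>R a) = (\<Sum>a\<in>S1. D1 a *\<^sub>R a)"
      by (rule sum.mono_neutral_right) (use fin z1 in auto)
    ultimately show ?thesis by (simp only:)
  qed
  also have "\<dots> = (\<chi> j. if j \<in> set (i # is) then p $ j else v $ j)"
    unfolding h0(2) h1(2) using ni by (auto simp: vec_eq_iff vec_set_def q_def algebra_simps)
  finally have m: "(\<Sum>a\<in>S0 \<union> S1. ((1 - q) * D0 a + q * D1 a) *\<^sub>R a) = (\<chi> j. if j \<in> set (i # is) then p $ j else v $ j)" .
  have s: "\<forall>a\<in>S0 \<union> S1. (1 - q) * D0 a + q * D1 a \<noteq> 0 \<longrightarrow>
      (\<forall>j. j \<notin> set (i # is) \<longrightarrow> a $ j = v $ j) \<and> (\<forall>j\<in>set (i # is). a $ j = 0 \<or> a $ j = 1)"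
  proof (intro ballI impI)
    fix a assume "a \<in> S0 \<union> S1" "(1 - q) * D0 a + q * D1 a \<noteq> 0"
    then have "(a \<in> S0 \<and> D0 a \<noteq> 0) \<or> (a \<in> S1 \<and> D1 a \<noteq> 0)" using z0 z1 by force
    then show "(\<forall>j. j \<notin> set (i # is) \<longrightarrow> a $ j = v $ j) \<and> (\<forall>j\<in>set (i # is). a $ j = 0 \<or> a $ j = 1)"
      using h0(3) h1(3) ni by (auto simp: vec_set_def)
  qed
  show ?case using r m s by blast
qed

definition mean_sampler :: "(real ^ 'n) set \<Rightarrow> ('n, real ^ 'n) gtree \<Rightarrow> bool" where
  "mean_sampler P t \<longleftrightarrow> wf_gtree t \<and> (\<forall>p\<in>P. p \<in> unit_cube \<and> (\<exists>S D. output_dist t p S D \<and>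
      (\<forall>u\<in>S. D u \<noteq> 0 \<longrightarrow> u \<in> P) \<and> (\<Sum>u\<in>S. D u *\<^sub>R u) = p))"

lemma unit_cube_eq_cbox: "(unit_cube :: (real ^ 'n) set) = cbox 0 1"
  by (auto simp: unit_cube_def mem_box_cart)

lemma convex_unit_cube: "convex (unit_cube :: (real ^ 'n) set)"
  unfolding unit_cube_eq_cbox by (rule convex_box)

lemma mean_sampler_unit_cube: "\<exists>t. mean_sampler (unit_cube :: (real ^ 'n) set) t"
proof -
  obtain xs :: "'n list" where xs: "set xs = UNIV" "distinct xs"
    using finite_distinct_list[of "UNIV :: 'n set"] by auto
  have "\<exists>S D. output_dist (cube_tree xs 0) p S D \<and> (\<forall>u\<in>S. D u \<noteq> 0 \<longrightarrow> u \<in> unit_cube)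
      \<and> (\<Sum>u\<in>S. D u *\<^sub>R u) = p" if p: "p \<in> unit_cube" for p
  proof -
    obtain S D where r: "output_dist (cube_tree xs 0) p S D"
      and mean: "(\<Sum>a\<in>S. D a *\<^sub>R a) = (\<chi> j. if j \<in> set xs then p $ j else (0::real^'n) $ j)"
      and vertex: "\<forall>a\<in>S. D a \<noteq> 0 \<longrightarrow> (\<forall>j\<in>set xs. a $ j = 0 \<or> a $ j = 1)"
      using output_dist_cube_tree[OF p xs(2), of 0] by blast
    have "u \<in> unit_cube" if "u \<in> S" "D u \<noteq> 0" for u
    proof -
      have "u $ j = 0 \<or> u $ j = 1" for j using vertex that xs(1) by blast
      then have "0 \<le> u $ j \<and> u $ j \<le> 1" for j by (metis order_refl zero_le_one)
      then show ?thesis unfolding unit_cube_def by blast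
    qed
    moreover have "(\<Sum>a\<in>S. D a *\<^sub>R a) = p" using mean xs(1) by (simp add: vec_eq_iff)
    ultimately show ?thesis using r by blast
  qed
  then show ?thesis
    unfolding mean_sampler_def using wf_gtree_cube_tree by blast
qed

text \<open>The point of the segment from u1 to u2 at which an affine function l vanishes.\<close>

definition crossing :: "('v \<Rightarrow> real) \<Rightarrow> 'v \<Rightarrow> 'v \<Rightarrow> 'v :: real_vector" where
  "crossing l u1 u2 = (1 / (l u1 - l u2)) *\<^sub>R ((- l u2) *\<^sub>R u1 + l u1 *\<^sub>R u2)"

definition accept_prob :: "('v \<Rightarrow> real) \<Rightarrow> real \<Rightarrow> 'v \<Rightarrow> 'v \<Rightarrow> real" where
  "accept_prob l C u1 u2 = (if 0 < l u1 \<and> l u2 < 0 then (l u1 - l u2) / C else 0)"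

lemma crossing_convex_combination:
  "crossing l u1 u2 = (- l u2 / (l u1 - l u2)) *\<^sub>R u1 + (l u1 / (l u1 - l u2)) *\<^sub>R u2"
  by (simp add: crossing_def scaleR_add_right scaleR_diff_right)

lemma crossing_in_convex:
  assumes "convex P" "u1 \<in> P" "u2 \<in> P" "0 < l u1" "l u2 < 0"
  shows "crossing l u1 u2 \<in> P"
  unfolding crossing_convex_combination
proof (rule convexD[OF assms(1-3)])
  show "0 \<le> - l u2 / (l u1 - l u2)" "0 \<le> l u1 / (l u1 - l u2)"
    using assms(4,5) by (simp_all add: divide_nonpos_pos)
  show "- l u2 / (l u1 - l u2) + l u1 / (l u1 - l u2) = 1"
    using assms(4,5) by (simp add: divide_simps)
qed

lemma inner_crossing:
  fixes a :: "'v :: real_inner"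
  assumes "a \<bullet> u1 \<noteq> a \<bullet> u2"
  shows "a \<bullet> crossing (\<lambda>x. a \<bullet> x - \<beta>) u1 u2 = \<beta>"
proof -
  have "a \<bullet> u1 - \<beta> - (a \<bullet> u2 - \<beta>) \<noteq> 0" using assms by simp
  then show ?thesis
    by (simp add: crossing_def inner_add_right divide_simps) (simp add: algebra_simps)
qed

lemma sum_sum_if_filter:
  fixes F :: "'a \<Rightarrow> 'a \<Rightarrow> 'b :: comm_monoid_add"
  assumes "finite S"
  shows "(\<Sum>u1\<in>S. \<Sum>u2\<in>S. if P u1 \<and> Q u2 then F u1 u2 else 0)
       = (\<Sum>u1\<in>{u\<in>S. P u}. \<Sum>u2\<in>{u\<in>S. Q u}. F u1 u2)"
proof -
  have "(\<Sum>u1\<in>S. \<Sum>u2\<in>S. if P u1 \<and> Q u2 then F u1 u2 else 0)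
      = (\<Sum>u1\<in>S. if P u1 then (\<Sum>u2\<in>S. if Q u2 then F u1 u2 else 0) else 0)"
    by (rule sum.cong) auto
  then show ?thesis
    using assms by (simp add: sum.inter_filter)
qed

lemma sum_split_sign:
  fixes f :: "'a \<Rightarrow> 'b :: comm_monoid_add" and l :: "'a \<Rightarrow> real"
  assumes "finite S"
  shows "(\<Sum>u\<in>S. f u) = (\<Sum>u\<in>{u\<in>S. 0 < l u}. f u) + (\<Sum>u\<in>{u\<in>S. l u < 0}. f u)
                        + (\<Sum>u\<in>{u\<in>S. l u = 0}. f u)"
proof -
  have "(\<Sum>u\<in>S. f u) = (\<Sum>u\<in>S. (if 0 < l u then f u else 0) + (if l u < 0 then f u else 0)
                                  + (if l u = 0 then f u else 0))"
    by (rule sum.cong) auto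
  then show ?thesis
    using assms by (simp add: sum.distrib sum.inter_filter)
qed

lemma sum_nonzero_split_sign:
  fixes f :: "'a \<Rightarrow> 'b :: comm_monoid_add" and l :: "'a \<Rightarrow> real"
  assumes "finite S"
  shows "(\<Sum>u\<in>{u\<in>S. l u \<noteq> 0}. f u) = (\<Sum>u\<in>{u\<in>S. 0 < l u}. f u) + (\<Sum>u\<in>{u\<in>S. l u < 0}. f u)"
proof -
  have "{u\<in>S. l u \<noteq> 0} = {u\<in>S. 0 < l u} \<union> {u\<in>S. l u < 0}" by auto
  also have "sum f \<dots> = (\<Sum>u\<in>{u\<in>S. 0 < l u}. f u) + (\<Sum>u\<in>{u\<in>S. l u < 0}. f u)"
    by (rule sum.union_disjoint) (use assms in auto)
  finally show ?thesis .
qed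

lemma sum_neg_part_eq_pos_part:
  fixes D l :: "'a \<Rightarrow> real"
  assumes "finite S" "(\<Sum>u\<in>S. D u * l u) = 0"
  shows "(\<Sum>u\<in>{u\<in>S. l u < 0}. D u * - l u) = (\<Sum>u\<in>{u\<in>S. 0 < l u}. D u * l u)"
  using assms sum_split_sign[OF assms(1), of "\<lambda>u. D u * l u" l] by (simp add: sum_negf)

lemma sum_pos_part_pos:
  fixes D l :: "'a \<Rightarrow> real"
  assumes "finite S" "\<And>u. 0 \<le> D u" "(\<Sum>u\<in>S. D u * l u) = 0"
    and "u \<in> S" "D u \<noteq> 0" "l u \<noteq> 0"
  shows "0 < (\<Sum>u\<in>{u\<in>S. 0 < l u}. D u * l u)"
proof (cases "0 < l u")
  case True
  then have "D u * l u \<le> (\<Sum>u\<in>{u\<in>S. 0 < l u}. D u * l u)"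
    using assms by (intro member_le_sum[where f="\<lambda>u. D u * l u"]) auto
  moreover have "0 < D u * l u" using True assms(2)[of u] assms(5) by simp
  ultimately show ?thesis by linarith
next
  case False
  then have "D u * - l u \<le> (\<Sum>u\<in>{u\<in>S. l u < 0}. D u * - l u)"
    using assms by (intro member_le_sum[where f="\<lambda>u. D u * - l u"]) (auto intro!: mult_nonneg_nonpos)
  moreover have "0 < D u * - l u"
    using False assms(2)[of u] assms(5,6) by (intro mult_pos_pos) auto
  ultimately show ?thesis using sum_neg_part_eq_pos_part[OF assms(1,3)] by linarith
qed

lemma sum_pairs_accept_prob:
  fixes D l :: "'a \<Rightarrow> real"
  assumes "finite S" "(\<Sum>u\<in>S. D u * l u) = 0"
  shows "(\<Sum>u1\<in>S. \<Sum>u2\<in>S. D u1 * D u2 * accept_prob l C u1 u2)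
       = (\<Sum>u\<in>{u\<in>S. 0 < l u}. D u * l u) * (\<Sum>u\<in>{u\<in>S. l u \<noteq> 0}. D u) / C"
proof -
  define Sp Sm where "Sp = {u\<in>S. 0 < l u}" and "Sm = {u\<in>S. l u < 0}"
  have "(\<Sum>u1\<in>S. \<Sum>u2\<in>S. D u1 * D u2 * accept_prob l C u1 u2)
      = (\<Sum>u1\<in>Sp. \<Sum>u2\<in>Sm. (D u1 * l u1 * D u2 + D u1 * (D u2 * - l u2)) / C)"
    unfolding Sp_def Sm_def accept_prob_def
    by (subst sum_sum_if_filter[OF assms(1), symmetric]) (intro sum.cong; simp add: field_simps)
  also have "\<dots> = ((\<Sum>u\<in>Sp. D u * l u) * (\<Sum>u\<in>Sm. D u) + (\<Sum>u\<in>Sp. D u) * (\<Sum>u\<in>Sm. D u * - l u)) / C"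
    by (simp only: sum_product sum.distrib[symmetric] sum_divide_distrib)
  also have "\<dots> = (\<Sum>u\<in>Sp. D u * l u) * (\<Sum>u\<in>{u\<in>S. l u \<noteq> 0}. D u) / C"
    using sum_neg_part_eq_pos_part[OF assms] sum_nonzero_split_sign[OF assms(1), of D l]
    by (simp add: Sp_def Sm_def algebra_simps)
  finally show ?thesis unfolding Sp_def .
qed

lemma sum_pairs_crossing:
  fixes D l :: "'v :: real_vector \<Rightarrow> real"
  assumes "finite S" "(\<Sum>u\<in>S. D u * l u) = 0"
  shows "(\<Sum>u1\<in>S. \<Sum>u2\<in>S. (D u1 * D u2 * accept_prob l C u1 u2) *\<^sub>R crossing l u1 u2)
       = ((\<Sum>u\<in>{u\<in>S. 0 < l u}. D u * l u) / C) *\<^sub>R (\<Sum>u\<in>{u\<in>S. l u \<noteq> 0}. D u *\<^sub>R u)"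
proof -
  define Sp Sm where "Sp = {u\<in>S. 0 < l u}" and "Sm = {u\<in>S. l u < 0}"
  have "(D u1 * D u2 * accept_prob l C u1 u2) *\<^sub>R crossing l u1 u2
      = (if 0 < l u1 \<and> l u2 < 0
         then (1 / C) *\<^sub>R ((D u2 * - l u2) *\<^sub>R (D u1 *\<^sub>R u1) + (D u1 * l u1) *\<^sub>R (D u2 *\<^sub>R u2)) else 0)"
    for u1 u2
  proof (cases "0 < l u1 \<and> l u2 < 0")
    case True
    then have "D u1 * D u2 * accept_prob l C u1 u2 * (1 / (l u1 - l u2)) = D u1 * D u2 / C"
      by (simp add: accept_prob_def)
    then have "(D u1 * D u2 * accept_prob l C u1 u2) *\<^sub>R crossing l u1 u2
        = (D u1 * D u2 / C) *\<^sub>R ((- l u2) *\<^sub>R u1 + l u1 *\<^sub>R u2)"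
      unfolding crossing_def scaleR_scaleR by simp
    then show ?thesis
      using True by (simp add: scaleR_add_right scaleR_diff_right divide_inverse ac_simps)
  qed (auto simp: accept_prob_def)
  then have "(\<Sum>u1\<in>S. \<Sum>u2\<in>S. (D u1 * D u2 * accept_prob l C u1 u2) *\<^sub>R crossing l u1 u2)
      = (1 / C) *\<^sub>R (\<Sum>u1\<in>Sp. \<Sum>u2\<in>Sm. (D u2 * - l u2) *\<^sub>R (D u1 *\<^sub>R u1) + (D u1 * l u1) *\<^sub>R (D u2 *\<^sub>R u2))"
    unfolding Sp_def Sm_def
    by (simp add: sum_sum_if_filter[OF assms(1)] scaleR_sum_right)
  also have "\<dots> = (1 / C) *\<^sub>R ((\<Sum>u\<in>Sm. D u * - l u) *\<^sub>R (\<Sum>u\<in>Sp. D u *\<^sub>R u)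
                                + (\<Sum>u\<in>Sp. D u * l u) *\<^sub>R (\<Sum>u\<in>Sm. D u *\<^sub>R u))"
    by (simp only: sum.distrib scaleR_sum_left[symmetric] scaleR_sum_right[symmetric])
  also have "\<dots> = ((\<Sum>u\<in>Sp. D u * l u) / C) *\<^sub>R (\<Sum>u\<in>{u\<in>S. l u \<noteq> 0}. D u *\<^sub>R u)"
    using sum_neg_part_eq_pos_part[OF assms] sum_nonzero_split_sign[OF assms(1), of "\<lambda>u. D u *\<^sub>R u" l]
    by (simp add: Sp_def Sm_def scaleR_add_right)
  finally show ?thesis unfolding Sp_def .
qed

lemma sum_split_zero:
  fixes f :: "'a \<Rightarrow> 'b :: comm_monoid_add" and l :: "'a \<Rightarrow> real"
  assumes "finite S"
  shows "(\<Sum>u\<in>S. f u) = (\<Sum>u\<in>{u\<in>S. l u = 0}. f u) + (\<Sum>u\<in>{u\<in>S. l u \<noteq> 0}. f u)"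
  using sum_split_sign[OF assms, where f=f and l=l] sum_nonzero_split_sign[OF assms, where f=f and l=l]
  by (simp add: ac_simps)

lemma sum_pairs_accept_prob_pos:
  fixes D l :: "'a \<Rightarrow> real"
  assumes "finite S" "\<And>u. 0 \<le> D u" "(\<Sum>u\<in>S. D u * l u) = 0" "0 < C"
    and "u \<in> S" "D u \<noteq> 0" "l u \<noteq> 0"
  shows "0 < (\<Sum>u1\<in>S. \<Sum>u2\<in>S. D u1 * D u2 * accept_prob l C u1 u2)"
proof -
  have "D u \<le> (\<Sum>u\<in>{u\<in>S. l u \<noteq> 0}. D u)"
    using assms by (intro member_le_sum) auto
  then have "0 < (\<Sum>u\<in>{u\<in>S. l u \<noteq> 0}. D u)"
    using assms(2)[of u] assms(6) by linarith
  then show ?thesis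
    unfolding sum_pairs_accept_prob[OF assms(1,3)]
    using sum_pos_part_pos[OF assms(1-3,5-7)] assms(4) by simp
qed

lemma sum_scaleR_swap:
  fixes E :: "'a \<Rightarrow> 'b \<Rightarrow> real" and y :: "'b \<Rightarrow> 'v::real_vector"
  shows "(\<Sum>x\<in>T. (\<Sum>u\<in>S. D u * E u x) *\<^sub>R y x) = (\<Sum>u\<in>S. D u *\<^sub>R (\<Sum>x\<in>T. E u x *\<^sub>R y x))"
  by (simp add: scaleR_sum_left scaleR_sum_right sum.swap[of _ T S])

definition accept_tree :: "('v :: real_vector \<Rightarrow> real) \<Rightarrow> real \<Rightarrow> 'v \<Rightarrow> 'v \<Rightarrow> ('n, 'v option) gtree" where
  "accept_tree l C u1 u2 = bern_tree (accept_prob l C u1 u2) (Some (crossing l u1 u2)) None"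

text \<open>The fair coin at the root only makes the root internal, as required by grepeat.\<close>

definition trial_tree :: "('v :: real_vector \<Rightarrow> real) \<Rightarrow> real \<Rightarrow> ('n, 'v) gtree \<Rightarrow> ('n, 'v option) gtree" where
  "trial_tree l C t =
     (let s = gbind t (\<lambda>u1. gbind t (accept_tree l C u1)) in branch (GConst (1/2)) s s)"

definition cut_tree :: "('v :: real_vector \<Rightarrow> real) \<Rightarrow> real \<Rightarrow> ('n, 'v) gtree \<Rightarrow> ('n, 'v) gtree" where
  "cut_tree l C t = gbind t (\<lambda>u. if l u = 0 then leaf_tree u else grepeat (trial_tree l C t))"

definition crossings :: "('v \<Rightarrow> real) \<Rightarrow> 'v set \<Rightarrow> 'v :: real_vector set" where
  "crossings l S = (\<lambda>(u1, u2). crossing l u1 u2) ` (S \<times> S)"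

definition trial_dist :: "('v :: real_vector \<Rightarrow> real) \<Rightarrow> real \<Rightarrow> 'v set \<Rightarrow> ('v \<Rightarrow> real) \<Rightarrow> 'v option \<Rightarrow> real" where
  "trial_dist l C S D x = (\<Sum>u1\<in>S. \<Sum>u2\<in>S. D u1 * D u2 *
     (case x of None \<Rightarrow> 1 - accept_prob l C u1 u2
              | Some y \<Rightarrow> if y = crossing l u1 u2 then accept_prob l C u1 u2 else 0))"

definition cut_dist :: "('v :: real_vector \<Rightarrow> real) \<Rightarrow> real \<Rightarrow> 'v set \<Rightarrow> ('v \<Rightarrow> real) \<Rightarrow> 'v \<Rightarrow> real" where
  "cut_dist l C S D y = (\<Sum>u\<in>S. D u *
     (if l u = 0 then (if y = u then 1 else 0)
      else trial_dist l C S D (Some y) / (1 - trial_dist l C S D None)))"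

lemma wf_gtree_accept_tree: "wf_gtree (accept_tree l C u1 u2)"
  unfolding accept_tree_def by (rule wf_gtree_bern_tree)

lemma wf_gtree_trial_tree: "wf_gtree t \<Longrightarrow> wf_gtree (trial_tree l C t)"
  unfolding trial_tree_def Let_def
  by (intro wf_gtree_branch wf_gtree_gbind wf_gtree_accept_tree) auto

lemma ginternal_trial_tree: "ginternal (trial_tree l C t [])"
  by (simp add: trial_tree_def Let_def)

lemma wf_gtree_cut_tree: "wf_gtree t \<Longrightarrow> wf_gtree (cut_tree l C t)"
  unfolding cut_tree_def
  by (intro wf_gtree_gbind) (auto intro: wf_gtree_grepeat wf_gtree_trial_tree ginternal_trial_tree)

lemma output_dist_trial_tree:
  assumes p: "p \<in> unit_cube" and wt: "wf_gtree t" and r: "output_dist t p S D"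
    and acc: "\<And>u1 u2. u1 \<in> S \<Longrightarrow> u2 \<in> S \<Longrightarrow> D u1 \<noteq> 0 \<Longrightarrow> D u2 \<noteq> 0 \<Longrightarrow>
                 0 \<le> accept_prob l C u1 u2 \<and> accept_prob l C u1 u2 \<le> 1"
  shows "output_dist (trial_tree l C t) p (insert None (Some ` crossings l S)) (trial_dist l C S D)"
proof -
  define A where "A u1 u2 x = (if x = Some (crossing l u1 u2) then accept_prob l C u1 u2 else 0)
      + (if x = None then 1 - accept_prob l C u1 u2 else 0)" for u1 u2 x
  define B where "B = (\<Union>u1\<in>{u1\<in>S. D u1 \<noteq> 0}. \<Union>u2\<in>{u2\<in>S. D u2 \<noteq> 0}. {Some (crossing l u1 u2), None})"
  have "output_dist (accept_tree l C u1 u2) p {Some (crossing l u1 u2), None} (A u1 u2)"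
    if "u1 \<in> S" "u2 \<in> S" "D u1 \<noteq> 0" "D u2 \<noteq> 0" for u1 u2
    unfolding accept_tree_def A_def using acc[OF that] by (intro output_dist_bern_tree) auto
  then have inner: "output_dist (gbind t (accept_tree l C u1)) p
      (\<Union>u2\<in>{u2\<in>S. D u2 \<noteq> 0}. {Some (crossing l u1 u2), None}) (\<lambda>x. \<Sum>u2\<in>S. D u2 * A u1 u2 x)"
    if "u1 \<in> S" "D u1 \<noteq> 0" for u1
    using that by (intro output_dist_gbind[OF p wt wf_gtree_accept_tree r]) auto
  have pair: "output_dist (gbind t (\<lambda>u1. gbind t (accept_tree l C u1))) p B
      (\<lambda>x. \<Sum>u1\<in>S. D u1 * (\<Sum>u2\<in>S. D u2 * A u1 u2 x))"
    unfolding B_def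
    by (rule output_dist_gbind[OF p wt _ r]) (use inner in \<open>auto intro!: wf_gtree_gbind wt wf_gtree_accept_tree\<close>)
  have "output_dist (trial_tree l C t) p (B \<union> B)
      (\<lambda>x. (1 - 1/2) * (\<Sum>u1\<in>S. D u1 * (\<Sum>u2\<in>S. D u2 * A u1 u2 x))
         + 1/2 * (\<Sum>u1\<in>S. D u1 * (\<Sum>u2\<in>S. D u2 * A u1 u2 x)))"
    unfolding trial_tree_def Let_def using output_dist_branch[OF _ pair pair, of "GConst (1/2)"] by simp
  then show ?thesis
  proof (rule output_dist_cong)
    show "B \<union> B \<subseteq> insert None (Some ` crossings l S)"
      by (auto simp: B_def crossings_def)
    show "finite (insert None (Some ` crossings l S))"
      using r by (simp add: crossings_def output_dist_def)
    show "(1 - 1/2) * (\<Sum>u1\<in>S. D u1 * (\<Sum>u2\<in>S. D u2 * A u1 u2 x))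
          + 1/2 * (\<Sum>u1\<in>S. D u1 * (\<Sum>u2\<in>S. D u2 * A u1 u2 x)) = trial_dist l C S D x" for x
      by (cases x) (auto simp: trial_dist_def A_def sum_distrib_left mult.assoc intro!: sum.cong)
  qed
qed

lemma trial_dist_None:
  assumes "(\<Sum>u\<in>S. D u) = 1"
  shows "trial_dist l C S D None = 1 - (\<Sum>u1\<in>S. \<Sum>u2\<in>S. D u1 * D u2 * accept_prob l C u1 u2)"
proof -
  have "(\<Sum>u1\<in>S. \<Sum>u2\<in>S. D u1 * D u2) = 1"
    using assms by (simp add: sum_distrib_left[symmetric])
  then show ?thesis
    by (simp add: trial_dist_def right_diff_distrib sum_subtractf)
qed

lemma sum_trial_dist_Some:
  assumes "finite Y" "crossings l S \<subseteq> Y"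
  shows "(\<Sum>y\<in>Y. trial_dist l C S D (Some y) *\<^sub>R y)
       = (\<Sum>u1\<in>S. \<Sum>u2\<in>S. (D u1 * D u2 * accept_prob l C u1 u2) *\<^sub>R crossing l u1 u2)"
proof -
  have "(\<Sum>y\<in>Y. (D u1 * D u2 * (if y = crossing l u1 u2 then accept_prob l C u1 u2 else 0)) *\<^sub>R y)
      = (D u1 * D u2 * accept_prob l C u1 u2) *\<^sub>R crossing l u1 u2"
    if "u1 \<in> S" "u2 \<in> S" for u1 u2
  proof -
    have "crossing l u1 u2 \<in> Y" using that assms(2) by (auto simp: crossings_def)
    then show ?thesis
      using assms(1) by (simp add: if_distrib[of "\<lambda>c. (D u1 * D u2 * c) *\<^sub>R _"] sum.delta' cong: if_cong)
  qed
  then show ?thesis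
    unfolding trial_dist_def option.case scaleR_sum_left
    by (simp only: sum.swap[where A=Y]) (simp cong: sum.cong)
qed

lemma output_dist_cut_tree:
  assumes p: "p \<in> unit_cube" and wt: "wf_gtree t" and r: "output_dist t p S D"
    and acc: "\<And>u1 u2. u1 \<in> S \<Longrightarrow> u2 \<in> S \<Longrightarrow> D u1 \<noteq> 0 \<Longrightarrow> D u2 \<noteq> 0 \<Longrightarrow>
                 0 \<le> accept_prob l C u1 u2 \<and> accept_prob l C u1 u2 \<le> 1"
    and bal: "(\<Sum>u\<in>S. D u * l u) = 0" and C: "0 < C"
  shows "output_dist (cut_tree l C t) p (S \<union> crossings l S) (cut_dist l C S D)"
proof -
  have fin: "finite S" using r by (simp add: output_dist_def)
  note Dnn = output_dist_nonneg[OF r p wt] and sum1 = output_dist_sum_eq_1[OF r p wt]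
  define E where "E u = (\<lambda>y. if l u = 0 then (if y = u then 1 else 0)
      else trial_dist l C S D (Some y) / (1 - trial_dist l C S D None))" for u
  have "output_dist (if l u = 0 then leaf_tree u else grepeat (trial_tree l C t)) p
      (if l u = 0 then {u} else crossings l S) (E u)" if "u \<in> S" "D u \<noteq> 0" for u
  proof (cases "l u = 0")
    case True
    then show ?thesis using output_dist_leaf_tree[of u p] by (simp add: E_def)
  next
    case False
    have "trial_dist l C S D None < 1"
      unfolding trial_dist_None[OF sum1]
      using sum_pairs_accept_prob_pos[OF fin Dnn bal C that False] by simp
    then have "output_dist (grepeat (trial_tree l C t)) p (Some -` insert None (Some ` crossings l S))
        (\<lambda>y. trial_dist l C S D (Some y) / (1 - trial_dist l C S D None))"
      by (intro output_dist_grepeat[OF p wf_gtree_trial_tree[OF wt] ginternal_trial_tree]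
          output_dist_trial_tree[OF p wt r acc])
    moreover have "Some -` insert None (Some ` crossings l S) = crossings l S" by auto
    ultimately show ?thesis using False by (simp add: E_def)
  qed
  then have "output_dist (cut_tree l C t) p
      (\<Union>u\<in>{u\<in>S. D u \<noteq> 0}. if l u = 0 then {u} else crossings l S) (\<lambda>y. \<Sum>u\<in>S. D u * E u y)"
    unfolding cut_tree_def
    by (intro output_dist_gbind[OF p wt _ r])
      (auto intro: wf_gtree_grepeat wf_gtree_trial_tree[OF wt] ginternal_trial_tree)
  then show ?thesis
    by (rule output_dist_cong) (use fin in \<open>auto simp: cut_dist_def E_def crossings_def\<close>)
qed

lemma cut_dist_mean:
  fixes D l :: "'v :: real_vector \<Rightarrow> real"
  assumes fin: "finite S" and Dnn: "\<And>u. 0 \<le> D u" and sum1: "(\<Sum>u\<in>S. D u) = 1"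
    and bal: "(\<Sum>u\<in>S. D u * l u) = 0" and C: "0 < C"
  shows "(\<Sum>y\<in>S \<union> crossings l S. cut_dist l C S D y *\<^sub>R y) = (\<Sum>u\<in>S. D u *\<^sub>R u)"
proof -
  define Y where "Y = S \<union> crossings l S"
  define W where "W = (\<Sum>u1\<in>S. \<Sum>u2\<in>S. D u1 * D u2 * accept_prob l C u1 u2)"
  define \<sigma> where "\<sigma> = (\<Sum>u\<in>{u\<in>S. 0 < l u}. D u * l u)"
  define M where "M = (\<Sum>u\<in>{u\<in>S. l u \<noteq> 0}. D u)"
  define m where "m = (1 / W) *\<^sub>R (\<sigma> / C) *\<^sub>R (\<Sum>u\<in>{u\<in>S. l u \<noteq> 0}. D u *\<^sub>R u)"
  have finY: "finite Y" using fin by (simp add: Y_def crossings_def)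
  have crY: "crossings l S \<subseteq> Y" by (simp add: Y_def)
  have accepted: "(\<Sum>y\<in>Y. (trial_dist l C S D (Some y) / (1 - trial_dist l C S D None)) *\<^sub>R y) = m"
  proof -
    have "(\<Sum>y\<in>Y. (trial_dist l C S D (Some y) / (1 - trial_dist l C S D None)) *\<^sub>R y)
        = (1 / W) *\<^sub>R (\<Sum>y\<in>Y. trial_dist l C S D (Some y) *\<^sub>R y)"
      by (simp add: trial_dist_None[OF sum1] W_def scaleR_sum_right divide_inverse mult.commute)
    then show ?thesis
      unfolding sum_trial_dist_Some[OF finY crY] sum_pairs_crossing[OF fin bal] m_def \<sigma>_def
      by simp
  qed
  have "(\<Sum>y\<in>Y. cut_dist l C S D y *\<^sub>R y) = (\<Sum>u\<in>S. D u *\<^sub>R (if l u = 0 then u else m))"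
    unfolding cut_dist_def sum_scaleR_swap
  proof (rule sum.cong[OF refl])
    fix u assume "u \<in> S"
    then have "(\<Sum>y\<in>Y. (if y = u then 1 else 0) *\<^sub>R y) = u"
      using finY by (simp add: Y_def if_distrib[of "\<lambda>c. c *\<^sub>R _"] sum.delta' cong: if_cong)
    then show "D u *\<^sub>R (\<Sum>y\<in>Y. (if l u = 0 then if y = u then 1 else 0
          else trial_dist l C S D (Some y) / (1 - trial_dist l C S D None)) *\<^sub>R y)
        = D u *\<^sub>R (if l u = 0 then u else m)"
      using accepted by simp
  qed
  also have "\<dots> = (\<Sum>u\<in>{u\<in>S. l u = 0}. D u *\<^sub>R u) + M *\<^sub>R m"
    using sum_split_zero[OF fin, where f="\<lambda>u. D u *\<^sub>R (if l u = 0 then u else m)" and l=l]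
    by (simp add: M_def scaleR_sum_left)
  also have "M *\<^sub>R m = (\<Sum>u\<in>{u\<in>S. l u \<noteq> 0}. D u *\<^sub>R u)"
  proof (cases "M = 0")
    case True
    then have "\<forall>u\<in>{u\<in>S. l u \<noteq> 0}. D u = 0"
      unfolding M_def using fin Dnn by (subst sum_nonneg_eq_0_iff[symmetric]) auto
    then show ?thesis using True by simp
  next
    case False
    then obtain u where "u \<in> {u\<in>S. l u \<noteq> 0}" "D u \<noteq> 0"
      unfolding M_def by (rule sum.not_neutral_contains_not_neutral)
    then have u: "u \<in> S" "l u \<noteq> 0" "D u \<noteq> 0" by auto
    have "0 < \<sigma>" unfolding \<sigma>_def by (rule sum_pos_part_pos[OF fin Dnn bal u(1,3,2)])
    moreover have "W = \<sigma> * M / C"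
      unfolding W_def \<sigma>_def M_def by (rule sum_pairs_accept_prob[OF fin bal])
    ultimately show ?thesis using False C by (simp add: m_def)
  qed
  finally show ?thesis
    using sum_split_zero[OF fin, where f="\<lambda>u. D u *\<^sub>R u" and l=l] by (simp add: Y_def)
qed

lemma cut_dist_support:
  assumes "cut_dist l C S D y \<noteq> 0"
  obtains "y \<in> S" "D y \<noteq> 0" "l y = 0"
    | u1 u2 where "u1 \<in> S" "u2 \<in> S" "D u1 \<noteq> 0" "D u2 \<noteq> 0" "0 < l u1" "l u2 < 0"
        "y = crossing l u1 u2"
proof -
  obtain u where u: "u \<in> S" "D u * (if l u = 0 then (if y = u then 1 else 0)
      else trial_dist l C S D (Some y) / (1 - trial_dist l C S D None)) \<noteq> 0"
    using assms unfolding cut_dist_def by (rule sum.not_neutral_contains_not_neutral)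
  show ?thesis
  proof (cases "l u = 0")
    case True
    then show ?thesis using u that(1) by (auto split: if_splits)
  next
    case False
    then have "trial_dist l C S D (Some y) \<noteq> 0" using u(2) by auto
    then obtain u1 u2 where "u1 \<in> S" "u2 \<in> S"
        "D u1 * D u2 * (if y = crossing l u1 u2 then accept_prob l C u1 u2 else 0) \<noteq> 0"
      unfolding trial_dist_def option.case
      by (auto elim!: sum.not_neutral_contains_not_neutral)
    then show ?thesis
      using that(2) by (auto simp: accept_prob_def split: if_splits)
  qed
qed

definition cube_bound :: "real ^ 'n \<Rightarrow> real \<Rightarrow> real" where
  "cube_bound a \<beta> = 1 + 2 * (\<Sum>i\<in>UNIV. \<bar>a $ i\<bar>) + 2 * \<bar>\<beta>\<bar>"

lemma cube_bound_pos: "0 < cube_bound a \<beta>"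
proof -
  have "0 \<le> (\<Sum>i\<in>UNIV. \<bar>a $ i\<bar>)" by (rule sum_nonneg) simp
  then show ?thesis unfolding cube_bound_def by linarith
qed

lemma cube_bound_gt:
  assumes "x \<in> unit_cube"
  shows "2 * \<bar>a \<bullet> x - \<beta>\<bar> < cube_bound a \<beta>"
proof -
  have "\<bar>a \<bullet> x\<bar> \<le> (\<Sum>i\<in>UNIV. \<bar>a $ i * x $ i\<bar>)"
    unfolding inner_vec_def inner_real_def by (rule sum_abs)
  also have "\<dots> \<le> (\<Sum>i\<in>UNIV. \<bar>a $ i\<bar>)"
    using assms by (intro sum_mono) (auto simp: unit_cube_def abs_mult intro: mult_left_le)
  finally show ?thesis
    unfolding cube_bound_def by (auto simp: abs_if split: if_split_asm)
qed

lemma accept_prob_cube_bound: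
  assumes "u1 \<in> unit_cube" "u2 \<in> unit_cube"
  shows "0 \<le> accept_prob (\<lambda>x. a \<bullet> x - \<beta>) (cube_bound a \<beta>) u1 u2
       \<and> accept_prob (\<lambda>x. a \<bullet> x - \<beta>) (cube_bound a \<beta>) u1 u2 \<le> 1"
proof -
  have "2 * \<bar>a \<bullet> u1 - \<beta>\<bar> < cube_bound a \<beta>" "2 * \<bar>a \<bullet> u2 - \<beta>\<bar> < cube_bound a \<beta>"
    using assms by (simp_all add: cube_bound_gt)
  then have "(a \<bullet> u1 - \<beta>) - (a \<bullet> u2 - \<beta>) \<le> cube_bound a \<beta>"
    by (auto simp: abs_if split: if_split_asm)
  then show ?thesis using cube_bound_pos[of a \<beta>] by (auto simp: accept_prob_def divide_le_eq_1)
qed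

lemma mean_sampler_cut:
  assumes smp: "mean_sampler P t" and cv: "convex P"
  shows "mean_sampler (P \<inter> {x. a \<bullet> x = \<beta>}) (cut_tree (\<lambda>x. a \<bullet> x - \<beta>) (cube_bound a \<beta>) t)"
  unfolding mean_sampler_def
proof (intro conjI ballI)
  let ?l = "\<lambda>x. a \<bullet> x - \<beta>" and ?C = "cube_bound a \<beta>"
  have wt: "wf_gtree t" and cube: "\<And>x. x \<in> P \<Longrightarrow> x \<in> unit_cube"
    using smp by (simp_all add: mean_sampler_def)
  show "wf_gtree (cut_tree ?l ?C t)" by (rule wf_gtree_cut_tree[OF wt])
  fix p assume "p \<in> P \<inter> {x. a \<bullet> x = \<beta>}"
  then have pP: "p \<in> P" and pH: "a \<bullet> p = \<beta>" by auto
  show p: "p \<in> unit_cube" using cube[OF pP] .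
  obtain S D where r: "output_dist t p S D" and supp: "\<And>u. u \<in> S \<Longrightarrow> D u \<noteq> 0 \<Longrightarrow> u \<in> P"
    and mean: "(\<Sum>u\<in>S. D u *\<^sub>R u) = p"
    using smp pP unfolding mean_sampler_def by blast
  have fin: "finite S" using r by (simp add: output_dist_def)
  note Dnn = output_dist_nonneg[OF r p wt] and sum1 = output_dist_sum_eq_1[OF r p wt]
  have "(\<Sum>u\<in>S. D u * (a \<bullet> u)) = a \<bullet> p"
    unfolding mean[symmetric] by (simp add: inner_sum_right)
  then have bal: "(\<Sum>u\<in>S. D u * ?l u) = 0"
    using pH sum1 by (simp add: right_diff_distrib sum_subtractf sum_distrib_right[symmetric])
  have acc: "0 \<le> accept_prob ?l ?C u1 u2 \<and> accept_prob ?l ?C u1 u2 \<le> 1"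
    if "u1 \<in> S" "u2 \<in> S" "D u1 \<noteq> 0" "D u2 \<noteq> 0" for u1 u2
    using that by (intro accept_prob_cube_bound cube supp)
  have "y \<in> P \<inter> {x. a \<bullet> x = \<beta>}" if "cut_dist ?l ?C S D y \<noteq> 0" for y
    using that
  proof (cases rule: cut_dist_support)
    case 1
    then show ?thesis using supp by auto
  next
    case (2 u1 u2)
    then show ?thesis
      using crossing_in_convex[OF cv supp supp, of u1 u2 ?l] inner_crossing[of a u1 u2 \<beta>] by auto
  qed
  moreover have "output_dist (cut_tree ?l ?C t) p (S \<union> crossings ?l S) (cut_dist ?l ?C S D)"
    by (rule output_dist_cut_tree[OF p wt r acc bal cube_bound_pos])
  moreover have "(\<Sum>y\<in>S \<union> crossings ?l S. cut_dist ?l ?C S D y *\<^sub>R y) = p"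
    unfolding mean[symmetric] by (rule cut_dist_mean[OF fin Dnn sum1 bal cube_bound_pos])
  ultimately show "\<exists>S' D'. output_dist (cut_tree ?l ?C t) p S' D' \<and>
      (\<forall>y\<in>S'. D' y \<noteq> 0 \<longrightarrow> y \<in> P \<inter> {x. a \<bullet> x = \<beta>}) \<and> (\<Sum>y\<in>S'. D' y *\<^sub>R y) = p"
    by blast
qed

lemma mean_sampler_Inter_hyperplanes:
  fixes F :: "(real ^ 'n) set set"
  assumes "finite F" "\<forall>h\<in>F. \<exists>a b. h = {x. a \<bullet> x = b}"
  shows "\<exists>t. mean_sampler (unit_cube \<inter> \<Inter>F) t"
  using assms
proof (induction F rule: finite_induct)
  case empty
  then show ?case using mean_sampler_unit_cube by simp
next
  case (insert h F)
  then obtain t where t: "mean_sampler (unit_cube \<inter> \<Inter>F) t" by auto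
  obtain a b where hab: "h = {x. a \<bullet> x = b}" using insert.prems by auto
  have "convex (unit_cube \<inter> \<Inter>F)"
    using insert.prems by (intro convex_Int convex_unit_cube convex_Inter) (auto simp: convex_hyperplane)
  moreover have "(unit_cube \<inter> \<Inter>F) \<inter> {x. a \<bullet> x = b} = unit_cube \<inter> \<Inter>(insert h F)"
    using hab by auto
  ultimately show ?case using mean_sampler_cut[OF t] by metis
qed

lemma mean_sampler_affine:
  fixes K :: "(real ^ 'n) set"
  assumes "affine K"
  shows "\<exists>t. mean_sampler (unit_cube \<inter> K) t"
proof -
  obtain F where F: "finite F" "affine hull K = \<Inter>F"
    "\<And>h. h \<in> F \<Longrightarrow> \<exists>a b. a \<noteq> 0 \<and> h = {x. a \<bullet> x = b}"
    using affine_hull_finite_intersection_hyperplanes[of K] by metis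
  have "affine hull K = K" using assms by (simp add: affine_hull_eq)
  then have "K = \<Inter>F" using F(2) by simp
  then show ?thesis
    using mean_sampler_Inter_hyperplanes[OF F(1)] F(3) by blast
qed


fun to_bf_node :: "('n, bool) gnode \<Rightarrow> 'n bf_node" where
  "to_bf_node (GCoin i) = Coin i" | "to_bf_node (GConst c) = Const c" | "to_bf_node (GLeaf b) = Leaf b"

definition to_bf_tree :: "('n, bool) gtree \<Rightarrow> 'n bf_tree" where
  "to_bf_tree t = (\<lambda>w. to_bf_node (t w))"

lemma is_internal_to_bf_node[simp]: "is_internal (to_bf_node x) = ginternal x"
  by (cases x) (auto simp: is_internal_def ginternal_def)

lemma reached_to_bf_tree: "reached (to_bf_tree t) w = greached t w"
  by (simp add: reached_def greached_def to_bf_tree_def)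

lemma coin_prob_to_bf_node[simp]: "coin_prob p (to_bf_node x) = gcoin_prob p x"
  by (cases x) auto

lemma path_prob_to_bf_tree: "path_prob (to_bf_tree t) p = gpath_prob t p"
  by (simp add: path_prob_def gpath_prob_def to_bf_tree_def fun_eq_iff)

lemma to_bf_node_eq_Leaf: "to_bf_node x = Leaf b \<longleftrightarrow> x = GLeaf b"
  by (cases x) auto

lemma to_bf_node_eq_Const: "to_bf_node x = Const c \<longleftrightarrow> x = GConst c"
  by (cases x) auto

lemma leaf_paths_to_bf_tree: "leaf_paths (to_bf_tree t) b = gleaf_paths t b"
  unfolding leaf_paths_def gleaf_paths_def reached_to_bf_tree by (simp add: to_bf_tree_def to_bf_node_eq_Leaf)

lemma wf_factory_to_bf_tree: "wf_factory (to_bf_tree t) = wf_gtree t"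
  unfolding wf_factory_def wf_gtree_def reached_to_bf_tree by (simp add: to_bf_tree_def to_bf_node_eq_Const)

lemma gleaves_bool: "gleaves (t :: ('n, bool) gtree) = gleaf_paths t True \<union> gleaf_paths t False"
proof (intro set_eqI iffI)
  fix w assume "w \<in> gleaves t"
  then show "w \<in> gleaf_paths t True \<union> gleaf_paths t False"
    using gleaf_paths_leaf_label[of w t] by (cases "leaf_label t w") auto
qed (auto dest: gleaf_pathsD)

lemma implements_to_bf_tree:
  assumes "\<And>p. p \<in> P \<Longrightarrow> \<exists>S D. output_dist t p S D \<and> D True = f p"
  shows "implements (to_bf_tree t) f P"
  unfolding implements_def leaf_paths_to_bf_tree path_prob_to_bf_tree gleaves_bool[symmetric]
proof
  fix p assume "p \<in> P"
  then obtain S D where "output_dist t p S D" "D True = f p" using assms by blast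
  then show "(gpath_prob t p has_sum 1) (gleaves t) \<and> (gpath_prob t p has_sum f p) (gleaf_paths t True)"
    unfolding output_dist_def by (metis (mono_tags))
qed

lemma output_dist_gbind_bern_tree:
  assumes "p \<in> unit_cube" "wf_gtree t" "output_dist t p S D"
    and "\<And>y. y \<in> S \<Longrightarrow> D y \<noteq> 0 \<Longrightarrow> 0 \<le> q y \<and> q y \<le> 1"
  shows "output_dist (gbind t (\<lambda>y. bern_tree (q y) True False)) p {True, False}
           (\<lambda>b. \<Sum>y\<in>S. D y * (if b then q y else 1 - q y))"
proof -
  have "output_dist (gbind t (\<lambda>y. bern_tree (q y) True False)) p
          (\<Union>y\<in>{y\<in>S. D y \<noteq> 0}. {True, False})
          (\<lambda>b. \<Sum>y\<in>S. D y * ((if b = True then q y else 0) + (if b = False then 1 - q y else 0)))"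
    using assms by (intro output_dist_gbind wf_gtree_bern_tree output_dist_bern_tree) auto
  then show ?thesis
    by (rule output_dist_cong) (auto intro: sum.cong)
qed

lemma barycentric_coordinates:
  fixes V :: "'a :: real_vector set"
  assumes "finite V"
  obtains \<mu> where "\<And>y v. y \<in> convex hull V \<Longrightarrow> v \<in> V \<Longrightarrow> 0 \<le> \<mu> y v"
    "\<And>y. y \<in> convex hull V \<Longrightarrow> (\<Sum>v\<in>V. \<mu> y v) = 1"
    "\<And>y. y \<in> convex hull V \<Longrightarrow> (\<Sum>v\<in>V. \<mu> y v *\<^sub>R v) = y"
proof -
  have "\<forall>y. \<exists>u. y \<in> convex hull V \<longrightarrow> (\<forall>v\<in>V. 0 \<le> u v) \<and> sum u V = 1 \<and> (\<Sum>v\<in>V. u v *\<^sub>R v) = y"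
    using assms by (auto simp: convex_hull_finite)
  then obtain \<mu> where "\<forall>y. y \<in> convex hull V \<longrightarrow>
      (\<forall>v\<in>V. 0 \<le> \<mu> y v) \<and> sum (\<mu> y) V = 1 \<and> (\<Sum>v\<in>V. \<mu> y v *\<^sub>R v) = y"
    by (rule choice[THEN exE])
  then show ?thesis using that by blast
qed

lemma mean_sampler_choice:
  assumes "mean_sampler P t"
  obtains S D where "\<And>p. p \<in> P \<Longrightarrow> output_dist t p (S p) (D p)"
    "\<And>p u. p \<in> P \<Longrightarrow> u \<in> S p \<Longrightarrow> D p u \<noteq> 0 \<Longrightarrow> u \<in> P"
    "\<And>p. p \<in> P \<Longrightarrow> (\<Sum>u\<in>S p. D p u *\<^sub>R u) = p"
proof -
  have "\<forall>p\<in>P. \<exists>S D. output_dist t p S D \<and> (\<forall>u\<in>S. D u \<noteq> 0 \<longrightarrow> u \<in> P) \<and> (\<Sum>u\<in>S. D u *\<^sub>R u) = p"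
    using assms by (simp add: mean_sampler_def)
  then obtain S where "\<forall>p\<in>P. \<exists>D. output_dist t p (S p) D \<and> (\<forall>u\<in>S p. D u \<noteq> 0 \<longrightarrow> u \<in> P)
      \<and> (\<Sum>u\<in>S p. D u *\<^sub>R u) = p"
    by (rule bchoice[THEN exE])
  then obtain D where "\<And>p. p \<in> P \<Longrightarrow> output_dist t p (S p) (D p)"
      "\<And>p u. p \<in> P \<Longrightarrow> u \<in> S p \<Longrightarrow> D p u \<noteq> 0 \<Longrightarrow> u \<in> P"
      "\<And>p. p \<in> P \<Longrightarrow> (\<Sum>u\<in>S p. D p u *\<^sub>R u) = p"
    by (rule bchoice[THEN exE]) blast
  then show ?thesis using that by blast
qed

lemma comb_factory_of_mean_sampler:
  assumes smp: "mean_sampler P t" and fin: "finite (vertices P)"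
    and hull: "P = convex hull (vertices P)"
  shows "\<exists>T. comb_factory P T"
proof -
  define V where "V = vertices P"
  have finV: "finite V" and hullV: "convex hull V = P" using fin hull by (simp_all add: V_def)
  obtain \<mu> where \<mu>_nonneg: "\<And>y v. y \<in> P \<Longrightarrow> v \<in> V \<Longrightarrow> 0 \<le> \<mu> y v"
    and \<mu>_sum: "\<And>y. y \<in> P \<Longrightarrow> (\<Sum>v\<in>V. \<mu> y v) = 1"
    and \<mu>_mean: "\<And>y. y \<in> P \<Longrightarrow> (\<Sum>v\<in>V. \<mu> y v *\<^sub>R v) = y"
    using barycentric_coordinates[OF finV] unfolding hullV by blast
  have \<mu>_le_1: "\<mu> y v \<le> 1" if "y \<in> P" "v \<in> V" for y v
    using member_le_sum[of v V "\<mu> y"] \<mu>_nonneg \<mu>_sum that finV by simp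
  have wt: "wf_gtree t" using smp by (simp add: mean_sampler_def)
  obtain S D where SD: "\<And>p. p \<in> P \<Longrightarrow> output_dist t p (S p) (D p)"
      "\<And>p u. p \<in> P \<Longrightarrow> u \<in> S p \<Longrightarrow> D p u \<noteq> 0 \<Longrightarrow> u \<in> P"
      "\<And>p. p \<in> P \<Longrightarrow> (\<Sum>u\<in>S p. D p u *\<^sub>R u) = p"
    using mean_sampler_choice[OF smp] by blast
  have cube: "p \<in> unit_cube" if "p \<in> P" for p
    using smp that by (simp add: mean_sampler_def)
  define f where "f v p = (\<Sum>u\<in>S p. D p u * \<mu> u v)" for v p
  define T where "T v = to_bf_tree (gbind t (\<lambda>u. bern_tree (\<mu> u v) True False))" for v
  have "implements (T v) (f v) P" if "v \<in> V" for v
    unfolding T_def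
  proof (rule implements_to_bf_tree)
    fix p assume p: "p \<in> P"
    have "output_dist (gbind t (\<lambda>u. bern_tree (\<mu> u v) True False)) p {True, False}
        (\<lambda>b. \<Sum>u\<in>S p. D p u * (if b then \<mu> u v else 1 - \<mu> u v))"
      using SD(2)[OF p] \<mu>_nonneg \<mu>_le_1 that
      by (intro output_dist_gbind_bern_tree[OF cube[OF p] wt SD(1)[OF p]]) auto
    then show "\<exists>S' D'. output_dist (gbind t (\<lambda>u. bern_tree (\<mu> u v) True False)) p S' D' \<and> D' True = f v p"
      unfolding f_def by fastforce
  qed
  moreover have "wf_factory (T v)" for v
    unfolding T_def wf_factory_to_bf_tree by (intro wf_gtree_gbind wt wf_gtree_bern_tree)
  moreover have "(\<Sum>v\<in>V. f v p) = 1" "(\<Sum>v\<in>V. f v p *\<^sub>R v) = p" if p: "p \<in> P" for p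
  proof -
    have supp: "D p u = 0" if "u \<in> S p" "u \<notin> P" for u
      using SD(2)[OF p that(1)] that(2) by blast
    have "(\<Sum>v\<in>V. f v p) = (\<Sum>u\<in>S p. D p u * (\<Sum>v\<in>V. \<mu> u v))"
      by (simp add: f_def sum.swap[of _ V] sum_distrib_left)
    also have "\<dots> = (\<Sum>u\<in>S p. D p u)"
    proof (rule sum.cong[OF refl])
      fix u assume "u \<in> S p"
      then show "D p u * (\<Sum>v\<in>V. \<mu> u v) = D p u"
        by (cases "u \<in> P") (simp_all add: \<mu>_sum supp)
    qed
    finally show "(\<Sum>v\<in>V. f v p) = 1"
      using output_dist_sum_eq_1[OF SD(1)[OF p] cube[OF p] wt] by simp
    have "(\<Sum>v\<in>V. f v p *\<^sub>R v) = (\<Sum>u\<in>S p. D p u *\<^sub>R (\<Sum>v\<in>V. \<mu> u v *\<^sub>R v))"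
      unfolding f_def by (rule sum_scaleR_swap)
    also have "\<dots> = (\<Sum>u\<in>S p. D p u *\<^sub>R u)"
    proof (rule sum.cong[OF refl])
      fix u assume "u \<in> S p"
      then show "D p u *\<^sub>R (\<Sum>v\<in>V. \<mu> u v *\<^sub>R v) = D p u *\<^sub>R u"
        by (cases "u \<in> P") (simp_all add: \<mu>_mean supp)
    qed
    finally show "(\<Sum>v\<in>V. f v p *\<^sub>R v) = p" using SD(3)[OF p] by simp
  qed
  ultimately show ?thesis
    unfolding comb_factory_def V_def[symmetric] by blast
qed

lemma polytope_unit_cube_Int_affine:
  fixes K :: "(real ^ 'n) set"
  assumes "affine K"
  shows "finite (vertices (unit_cube \<inter> K))"
    and "unit_cube \<inter> K = convex hull (vertices (unit_cube \<inter> K))"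
proof -
  have "polyhedron (unit_cube \<inter> K)" unfolding unit_cube_eq_cbox
    by (intro polyhedron_Int polyhedron_interval affine_imp_polyhedron assms)
  then show "finite (vertices (unit_cube \<inter> K))"
    unfolding vertices_def by (rule finite_polyhedron_extreme_points)
  have "compact (unit_cube \<inter> K)" "convex (unit_cube \<inter> K)"
    unfolding unit_cube_eq_cbox using affine_closed[OF assms] affine_imp_convex[OF assms]
    by (auto intro: compact_Int_closed convex_Int)
  then show "unit_cube \<inter> K = convex hull (vertices (unit_cube \<inter> K))"
    unfolding vertices_def by (rule Krein_Milman_Minkowski)
qed

theorem theorem4:
  fixes K :: "(real ^ 'n) set"
  assumes "affine K"
  shows "\<exists>T. comb_factory ({p. \<forall>i. 0 \<le> p $ i \<and> p $ i \<le> 1} \<inter> K) T"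
proof -
  obtain t where "mean_sampler (unit_cube \<inter> K) t"
    using mean_sampler_affine[OF assms] by blast
  then have "\<exists>T. comb_factory (unit_cube \<inter> K) T"
    by (rule comb_factory_of_mean_sampler[OF _ polytope_unit_cube_Int_affine[OF assms]])
  then show ?thesis by (simp add: unit_cube_def)
qed

end
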